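(* Let $G$ be a finite simple connected graph with no $K_5$ minor, not isomorphic to $C_5$, that has no dynamic $4$-coloring, and suppose $G$ has the minimum number of edges among all such graphs (i.e., every finite simple connected graph with no $K_5$ minor, not isomorphic to $C_5$, and with fewer edges than $G$ is dynamically $4$-colorable). Then $G$ is internally $3$-connected.
   Context: All graphs are finite and simple. Given a proper vertex coloring of a graph, a vertex $v$ is happy if either $v$ has at most one neighbor or $v$ has two neighbors receiving distinct colors. A dynamic $4$-coloring is a proper vertex coloring with at most $4$ colors in which every vertex is happy. A separation of $G$ is a pair $(A,B)$ of subsets of $V(G)$ with $A\cup B=V(G)$, $A\setminus B\neq\emptyset$, $B\setminus A\neq\emptyset$, and no edge between $A\setminus B$ and $B\setminus A$; its order is $|A\cap B|$. A graph $G$ is internally $k$-connected if $|V(G)|>k$, $G$ is $(k-1)$-connected, and for every separation $(A,B)$ of order $k-1$, either $|A\setminus B|=1$ or $|B\setminus A|=1$. *)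

theory Defs
  imports Main
begin

definition simple_graph :: "'a set \<Rightarrow> ('a \<Rightarrow> 'a \<Rightarrow> bool) \<Rightarrow> bool" where
  "simple_graph V E \<longleftrightarrow> finite V \<and> (\<forall>u v. E u v \<longrightarrow> u \<in> V \<and> v \<in> V \<and> u \<noteq> v \<and> E v u)"

definition edge_set :: "'a set \<Rightarrow> ('a \<Rightarrow> 'a \<Rightarrow> bool) \<Rightarrow> 'a set set" where
  "edge_set V E = {{u, v} | u v. u \<in> V \<and> v \<in> V \<and> E u v}"

definition num_edges :: "'a set \<Rightarrow> ('a \<Rightarrow> 'a \<Rightarrow> bool) \<Rightarrow> nat" where
  "num_edges V E = card (edge_set V E)"

definition neighbors :: "'a set \<Rightarrow> ('a \<Rightarrow> 'a \<Rightarrow> bool) \<Rightarrow> 'a \<Rightarrow> 'a set" where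
  "neighbors V E v = {u \<in> V. E v u}"

definition connected_on :: "'a set \<Rightarrow> ('a \<Rightarrow> 'a \<Rightarrow> bool) \<Rightarrow> bool" where
  "connected_on S E \<longleftrightarrow> S \<noteq> {} \<and>
     (\<forall>u\<in>S. \<forall>v\<in>S. (\<lambda>x y. x \<in> S \<and> y \<in> S \<and> E x y)\<^sup>*\<^sup>* u v)"

definition connected_graph :: "'a set \<Rightarrow> ('a \<Rightarrow> 'a \<Rightarrow> bool) \<Rightarrow> bool" where
  "connected_graph V E \<longleftrightarrow> connected_on V E"

definition has_K5_minor :: "'a set \<Rightarrow> ('a \<Rightarrow> 'a \<Rightarrow> bool) \<Rightarrow> bool" where
  "has_K5_minor V E \<longleftrightarrow> (\<exists>B :: nat \<Rightarrow> 'a set.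
     (\<forall>i<5. B i \<subseteq> V \<and> connected_on (B i) E) \<and>
     (\<forall>i<5. \<forall>j<5. i \<noteq> j \<longrightarrow> B i \<inter> B j = {} \<and> (\<exists>u\<in>B i. \<exists>v\<in>B j. E u v)))"

definition iso_C5 :: "'a set \<Rightarrow> ('a \<Rightarrow> 'a \<Rightarrow> bool) \<Rightarrow> bool" where
  "iso_C5 V E \<longleftrightarrow> (\<exists>f :: nat \<Rightarrow> 'a. bij_betw f {0..<5} V \<and>
     (\<forall>i<5. \<forall>j<5. E (f i) (f j) \<longleftrightarrow> (j = (i + 1) mod 5 \<or> i = (j + 1) mod 5)))"

definition proper_coloring :: "'a set \<Rightarrow> ('a \<Rightarrow> 'a \<Rightarrow> bool) \<Rightarrow> ('a \<Rightarrow> nat) \<Rightarrow> bool" where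
  "proper_coloring V E c \<longleftrightarrow> (\<forall>u\<in>V. \<forall>v\<in>V. E u v \<longrightarrow> c u \<noteq> c v)"

definition happy :: "'a set \<Rightarrow> ('a \<Rightarrow> 'a \<Rightarrow> bool) \<Rightarrow> ('a \<Rightarrow> nat) \<Rightarrow> 'a \<Rightarrow> bool" where
  "happy V E c v \<longleftrightarrow> card (neighbors V E v) \<le> 1 \<or>
     (\<exists>u\<in>neighbors V E v. \<exists>w\<in>neighbors V E v. c u \<noteq> c w)"

definition dynamic_4_coloring :: "'a set \<Rightarrow> ('a \<Rightarrow> 'a \<Rightarrow> bool) \<Rightarrow> ('a \<Rightarrow> nat) \<Rightarrow> bool" where
  "dynamic_4_coloring V E c \<longleftrightarrow> (\<forall>v\<in>V. c v < 4) \<and> proper_coloring V E c \<and> (\<forall>v\<in>V. happy V E c v)"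

definition dynamically_4_colorable :: "'a set \<Rightarrow> ('a \<Rightarrow> 'a \<Rightarrow> bool) \<Rightarrow> bool" where
  "dynamically_4_colorable V E \<longleftrightarrow> (\<exists>c. dynamic_4_coloring V E c)"

definition separation :: "'a set \<Rightarrow> ('a \<Rightarrow> 'a \<Rightarrow> bool) \<Rightarrow> 'a set \<Rightarrow> 'a set \<Rightarrow> bool" where
  "separation V E A B \<longleftrightarrow> A \<union> B = V \<and> A - B \<noteq> {} \<and> B - A \<noteq> {} \<and>
     (\<forall>u\<in>A - B. \<forall>v\<in>B - A. \<not> E u v)"

definition k_connected :: "nat \<Rightarrow> 'a set \<Rightarrow> ('a \<Rightarrow> 'a \<Rightarrow> bool) \<Rightarrow> bool" where
  "k_connected k V E \<longleftrightarrow> card V > k \<and>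
     (\<forall>X \<subseteq> V. card X < k \<longrightarrow> connected_on (V - X) E)"

definition internally_k_connected :: "nat \<Rightarrow> 'a set \<Rightarrow> ('a \<Rightarrow> 'a \<Rightarrow> bool) \<Rightarrow> bool" where
  "internally_k_connected k V E \<longleftrightarrow> card V > k \<and> k_connected (k - 1) V E \<and>
     (\<forall>A B. separation V E A B \<and> card (A \<inter> B) = k - 1 \<longrightarrow>
        card (A - B) = 1 \<or> card (B - A) = 1)"

end

theory Submission
  imports Defs
begin

text \<open>
  Let \<open>G\<close> be a minimal counterexample. Every graph with fewer edges, on any vertex type, is
  dynamically 4-colorable (it has an isomorphic copy on \<open>nat\<close>), and attaching a pendant edge at \<open>v\<close> to a graph with at least two fewer edges yields a coloring in
  which every vertex except \<open>v\<close> is happy. Hence \<open>G\<close> has at least five vertices and minimum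
  degree two, and it has no separation of order at most one: color both sides so that every vertex
  except the separator is happy, permute colors so that the two colorings agree on the separator
  and its neighbors on the two sides differ, and glue.

  Let \<open>{x, y}\<close> separate \<open>G\<close> with at least two vertices on each side. The same gluing rules out
  the edge \<open>xy\<close>. If a vertex \<open>w\<close> of one side has neighborhood exactly \<open>{x, y}\<close>, color the other
  side together with \<open>w\<close>: then \<open>x\<close>, \<open>y\<close>, \<open>w\<close> get three distinct colors on both sides, which
  makes \<open>x\<close> and \<open>y\<close> happy after gluing. That graph is not a 5-cycle, since otherwise \<open>G\<close>
  contains two adjacent vertices of degree two, a configuration removed by deleting an edge and
  recoloring. If there is no such \<open>w\<close>, identify \<open>x\<close> and \<open>y\<close> within each side (the resulting
  graphs are minors of \<open>G\<close>), color, and pull back: \<open>x\<close> and \<open>y\<close> get color \<open>0\<close> on both sides,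
  and a final permutation of one side makes them happy.
\<close>

section \<open>Connectivity of vertex sets\<close>

definition induced :: "'a set \<Rightarrow> ('a \<Rightarrow> 'a \<Rightarrow> bool) \<Rightarrow> 'a \<Rightarrow> 'a \<Rightarrow> bool" where
  "induced S F = (\<lambda>x y. x \<in> S \<and> y \<in> S \<and> F x y)"

lemma induced_apply: "induced S F x y \<longleftrightarrow> x \<in> S \<and> y \<in> S \<and> F x y"
  by (simp add: induced_def)

lemma induced_idem [simp]: "induced S (induced S F) = induced S F"
  by (auto simp: fun_eq_iff induced_def)

lemma connected_on_iff:
  "connected_on S F \<longleftrightarrow> S \<noteq> {} \<and> (\<forall>u\<in>S. \<forall>v\<in>S. (induced S F)\<^sup>*\<^sup>* u v)"
  by (simp add: connected_on_def induced_def)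

lemma connected_on_induced [simp]: "connected_on S (induced S F) \<longleftrightarrow> connected_on S F"
  by (simp add: connected_on_iff)

lemma induced_rtranclp_sym:
  assumes "symp F" "(induced S F)\<^sup>*\<^sup>* a b"
  shows "(induced S F)\<^sup>*\<^sup>* b a"
proof -
  have "symp (induced S F)" using assms(1) by (auto simp: symp_def induced_def)
  then show ?thesis using assms(2) by (metis symp_rtranclp sympD)
qed

lemma induced_rtranclp_mono:
  assumes "(induced S F)\<^sup>*\<^sup>* a b" "S \<subseteq> T" "\<And>u v. u \<in> S \<Longrightarrow> v \<in> S \<Longrightarrow> F u v \<Longrightarrow> F' u v"
  shows "(induced T F')\<^sup>*\<^sup>* a b"
  using mono_rtranclp[of "induced S F" "induced T F'"] assms by (auto simp: induced_def)

lemma induced_rtranclp_in: "(induced S F)\<^sup>*\<^sup>* a b \<Longrightarrow> a \<in> S \<Longrightarrow> b \<in> S"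
  by (induction rule: rtranclp_induct) (auto simp: induced_def)

lemma connected_onI:
  assumes "r \<in> S" "\<And>v. v \<in> S \<Longrightarrow> (induced S F)\<^sup>*\<^sup>* r v" "symp F"
  shows "connected_on S F"
  unfolding connected_on_iff
  using assms induced_rtranclp_sym[OF assms(3)] by (meson empty_iff rtranclp_trans)

lemma connected_on_path: "connected_on S F \<Longrightarrow> u \<in> S \<Longrightarrow> v \<in> S \<Longrightarrow> (induced S F)\<^sup>*\<^sup>* u v"
  by (simp add: connected_on_iff)

lemma connected_on_mono:
  assumes "connected_on S F" "\<And>u v. u \<in> S \<Longrightarrow> v \<in> S \<Longrightarrow> F u v \<Longrightarrow> F' u v"
  shows "connected_on S F'"
  using assms induced_rtranclp_mono[of S F _ _ S F'] by (auto simp: connected_on_iff)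

lemma connected_on_singleton: "connected_on {a} F"
  by (simp add: connected_on_iff)

lemma connected_on_Un_edge:
  assumes "connected_on S F" "connected_on T F" "s \<in> S" "t \<in> T" "F s t" "symp F"
  shows "connected_on (S \<union> T) F"
proof (rule connected_onI[OF _ _ assms(6)])
  show "s \<in> S \<union> T" using assms(3) by simp
  fix v assume v: "v \<in> S \<union> T"
  show "(induced (S \<union> T) F)\<^sup>*\<^sup>* s v"
  proof (cases "v \<in> S")
    case True
    then show ?thesis by (intro induced_rtranclp_mono[OF connected_on_path[OF assms(1,3)]]) auto
  next
    case False
    then have "(induced (S \<union> T) F)\<^sup>*\<^sup>* t v"
      using v by (intro induced_rtranclp_mono[OF connected_on_path[OF assms(2,4)]]) auto
    moreover have "induced (S \<union> T) F s t" using assms(3-5) by (simp add: induced_def)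
    ultimately show ?thesis by (simp add: converse_rtranclp_into_rtranclp)
  qed
qed

lemma connected_on_edge_leaving:
  assumes "connected_on V F" "T \<subseteq> V" "T \<noteq> {}" "V - T \<noteq> {}"
  shows "\<exists>t\<in>T. \<exists>u\<in>V - T. F t u"
proof -
  obtain t0 u0 where t0: "t0 \<in> T" and u0: "u0 \<in> V - T" using assms by auto
  have "(induced V F)\<^sup>*\<^sup>* t0 u0" using connected_on_path[OF assms(1)] t0 u0 assms(2) by auto
  then have "u0 \<in> T \<or> (\<exists>t\<in>T. \<exists>u\<in>V - T. F t u)"
    by (induction rule: rtranclp_induct) (use t0 in \<open>auto simp: induced_def\<close>)
  with u0 show ?thesis by auto
qed

lemma connected_on_has_neighbor:
  assumes "connected_on S F" "u \<in> S" "v \<in> S" "u \<noteq> v"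
  shows "\<exists>w\<in>S. w \<noteq> u \<and> F u w"
  using connected_on_edge_leaving[OF assms(1), of "{u}"] assms by auto

lemma connected_on_Diff_leaf:
  assumes conn: "connected_on S F" and x: "x \<in> S" and ne: "S \<noteq> {x}"
    and leaf: "\<And>z. z \<in> S \<Longrightarrow> F x z \<Longrightarrow> z = y" and sym: "symp F"
  shows "connected_on (S - {x}) F"
proof -
  obtain r where r: "r \<in> S" "r \<noteq> x" using ne x by auto
  show ?thesis
  proof (rule connected_onI[OF _ _ sym])
    show "r \<in> S - {x}" using r by simp
    fix v assume v: "v \<in> S - {x}"
    have "(induced S F)\<^sup>*\<^sup>* r v" using connected_on_path[OF conn r(1)] v by auto
    then have "(v \<noteq> x \<and> (induced (S - {x}) F)\<^sup>*\<^sup>* r v) \<or>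
               (v = x \<and> y \<in> S - {x} \<and> (induced (S - {x}) F)\<^sup>*\<^sup>* r y)"
    proof (induction rule: rtranclp_induct)
      case base then show ?case using r by simp
    next
      case (step b c)
      then have bc: "b \<in> S" "c \<in> S" "F b c" by (auto simp: induced_def)
      from step.IH show ?case
      proof
        assume IH: "b \<noteq> x \<and> (induced (S - {x}) F)\<^sup>*\<^sup>* r b"
        show ?case
        proof (cases "c = x")
          case True
          then have "b = y" using leaf bc sym by (auto dest: sympD)
          then show ?thesis using IH True bc by auto
        next
          case False
          then have "induced (S - {x}) F b c" using IH bc by (simp add: induced_def)
          then show ?thesis using IH False by (meson rtranclp.rtrancl_into_rtrancl)
        qed
      qed (use leaf bc in auto)
    qed
    then show "(induced (S - {x}) F)\<^sup>*\<^sup>* r v" using v by auto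
  qed
qed

lemma connected_on_UN:
  assumes conn: "connected_on B F" and BH: "B \<subseteq> VH"
    and phi: "\<And>u. u \<in> VH \<Longrightarrow> connected_on (\<phi> u) E"
    and edge: "\<And>u v. u \<in> VH \<Longrightarrow> v \<in> VH \<Longrightarrow> F u v \<Longrightarrow> \<exists>p\<in>\<phi> u. \<exists>q\<in>\<phi> v. E p q"
    and sym: "symp E"
  shows "connected_on (\<Union>(\<phi> ` B)) E"
proof -
  obtain r where r: "r \<in> B" using conn by (auto simp: connected_on_iff)
  then obtain r' where r': "r' \<in> \<phi> r" using phi BH by (fastforce simp: connected_on_iff)
  let ?U = "\<Union>(\<phi> ` B)"
  have inside: "(induced ?U E)\<^sup>*\<^sup>* p q" if "v \<in> B" "p \<in> \<phi> v" "q \<in> \<phi> v" for v p q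
  proof (rule induced_rtranclp_mono)
    show "(induced (\<phi> v) E)\<^sup>*\<^sup>* p q" using connected_on_path[OF phi[of v]] that BH by blast
  qed (use that in auto)
  have reach: "\<forall>q\<in>\<phi> v. (induced ?U E)\<^sup>*\<^sup>* r' q" if "(induced B F)\<^sup>*\<^sup>* r v" for v
    using that
  proof (induction rule: rtranclp_induct)
    case base
    then show ?case using inside r r' by blast
  next
    case (step v w)
    then have vw: "v \<in> B" "w \<in> B" "F v w" by (auto simp: induced_def)
    obtain p q0 where p: "p \<in> \<phi> v" and q0: "q0 \<in> \<phi> w" and pq: "E p q0"
      using edge[of v w] vw BH by auto
    have "induced ?U E p q0" using p q0 pq vw by (auto simp: induced_def)
    then have "(induced ?U E)\<^sup>*\<^sup>* r' q0" using step.IH p by (meson rtranclp.rtrancl_into_rtrancl)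
    then show ?case using inside[OF vw(2) q0] by (meson rtranclp_trans)
  qed
  show ?thesis
  proof (rule connected_onI[OF _ _ sym])
    show "r' \<in> ?U" using r r' by blast
    fix x assume "x \<in> ?U"
    then obtain v where v: "v \<in> B" "x \<in> \<phi> v" by blast
    then show "(induced ?U E)\<^sup>*\<^sup>* r' x" using reach connected_on_path[OF conn r] by blast
  qed
qed

definition component :: "'a set \<Rightarrow> ('a \<Rightarrow> 'a \<Rightarrow> bool) \<Rightarrow> 'a \<Rightarrow> 'a set" where
  "component S F a = {b. (induced S F)\<^sup>*\<^sup>* a b}"

lemma component_subset: "a \<in> S \<Longrightarrow> component S F a \<subseteq> S"
  using induced_rtranclp_in by (fastforce simp: component_def)

lemma component_self: "a \<in> component S F a"
  by (simp add: component_def)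

lemma component_closed:
  assumes "a \<in> S" "b \<in> component S F a" "c \<in> S" "F b c"
  shows "c \<in> component S F a"
proof -
  have "(induced S F)\<^sup>*\<^sup>* a b" using assms(2) by (simp add: component_def)
  moreover have "b \<in> S" using induced_rtranclp_in calculation assms(1) .
  moreover have "induced S F b c" using \<open>b \<in> S\<close> assms(3,4) by (simp add: induced_def)
  ultimately show ?thesis by (simp add: component_def)
qed

lemma connected_on_component:
  assumes "a \<in> S" "symp F"
  shows "connected_on (component S F a) F"
proof (rule connected_onI[OF component_self _ assms(2)])
  fix v assume "v \<in> component S F a"
  then have "(induced S F)\<^sup>*\<^sup>* a v" by (simp add: component_def)
  then show "(induced (component S F a) F)\<^sup>*\<^sup>* a v"
  proof (induction rule: rtranclp_induct)
    case (step y z)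
    then have "y \<in> component S F a" "z \<in> component S F a"
      by (auto simp: component_def intro: rtranclp.rtrancl_into_rtrancl)
    then have "induced (component S F a) F y z"
      using step.hyps(2) by (simp add: induced_def)
    with step.IH show ?case by (rule rtranclp.rtrancl_into_rtrancl)
  qed simp
qed

lemma has_K5_minor_branch_map:
  assumes K: "has_K5_minor VH F"
    and phi: "\<And>u. u \<in> VH \<Longrightarrow> \<phi> u \<subseteq> V \<and> connected_on (\<phi> u) E"
    and disj: "\<And>u v. u \<in> VH \<Longrightarrow> v \<in> VH \<Longrightarrow> u \<noteq> v \<Longrightarrow> \<phi> u \<inter> \<phi> v = {}"
    and edge: "\<And>u v. u \<in> VH \<Longrightarrow> v \<in> VH \<Longrightarrow> F u v \<Longrightarrow> \<exists>p\<in>\<phi> u. \<exists>q\<in>\<phi> v. E p q"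
    and sym: "symp E"
  shows "has_K5_minor V E"
proof -
  obtain B :: "nat \<Rightarrow> _" where
    B1: "\<forall>i<5. B i \<subseteq> VH \<and> connected_on (B i) F" and
    B2: "\<forall>i<5. \<forall>j<5. i \<noteq> j \<longrightarrow> B i \<inter> B j = {} \<and> (\<exists>u\<in>B i. \<exists>v\<in>B j. F u v)"
    using K unfolding has_K5_minor_def by blast
  define B' where "B' i = \<Union>(\<phi> ` B i)" for i
  have "\<forall>i<5. B' i \<subseteq> V \<and> connected_on (B' i) E"
  proof (intro allI impI conjI)
    fix i :: nat assume i: "i < 5"
    show "B' i \<subseteq> V" using B1 i phi unfolding B'_def by blast
    show "connected_on (B' i) E" unfolding B'_def
      by (rule connected_on_UN[where VH=VH and F=F]) (use B1 i phi edge sym in auto)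
  qed
  moreover have "\<forall>i<5. \<forall>j<5. i \<noteq> j \<longrightarrow> B' i \<inter> B' j = {} \<and> (\<exists>u\<in>B' i. \<exists>v\<in>B' j. E u v)"
  proof (intro allI impI conjI)
    fix i j :: nat assume ij: "i < 5" "j < 5" "i \<noteq> j"
    show "B' i \<inter> B' j = {}"
    proof (rule ccontr)
      assume "B' i \<inter> B' j \<noteq> {}"
      then obtain p u v where "u \<in> B i" "v \<in> B j" "p \<in> \<phi> u" "p \<in> \<phi> v" unfolding B'_def by blast
      moreover have "u \<noteq> v" using B2 ij \<open>u \<in> B i\<close> \<open>v \<in> B j\<close> by blast
      ultimately show False using disj[of u v] B1 ij by blast
    qed
    obtain u v where "u \<in> B i" "v \<in> B j" "F u v" using B2 ij by blast
    then show "\<exists>u\<in>B' i. \<exists>v\<in>B' j. E u v" using edge[of u v] B1 ij unfolding B'_def by blast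
  qed
  ultimately show ?thesis unfolding has_K5_minor_def by blast
qed

lemma has_K5_minor_subgraph:
  assumes "has_K5_minor S F" "S \<subseteq> V" "\<And>u v. u \<in> S \<Longrightarrow> v \<in> S \<Longrightarrow> F u v \<Longrightarrow> E u v" "symp E"
  shows "has_K5_minor V E"
  by (rule has_K5_minor_branch_map[OF assms(1), where \<phi>="\<lambda>u. {u}"])
    (use assms connected_on_singleton in auto)

lemma simple_graphD:
  assumes "simple_graph H F" "F u v"
  shows "u \<in> H" "v \<in> H" "u \<noteq> v" "F v u"
  using assms by (auto simp: simple_graph_def)

lemma simple_graphI:
  "finite H \<Longrightarrow> (\<And>u v. F u v \<Longrightarrow> u \<in> H \<and> v \<in> H \<and> u \<noteq> v \<and> F v u) \<Longrightarrow> simple_graph H F"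
  by (simp add: simple_graph_def)

lemma simple_graph_finite: "simple_graph H F \<Longrightarrow> finite H"
  by (simp add: simple_graph_def)

lemma simple_graph_symp: "simple_graph H F \<Longrightarrow> symp F"
  by (auto simp: symp_def dest: simple_graphD)

lemma simple_graph_induced: "simple_graph H F \<Longrightarrow> S \<subseteq> H \<Longrightarrow> simple_graph S (induced S F)"
  by (intro simple_graphI) (auto simp: induced_def dest: simple_graphD intro: finite_subset simple_graph_finite)

lemma finite_edge_set: "finite H \<Longrightarrow> finite (edge_set H F)"
  by (rule finite_subset[of _ "Pow H"]) (auto simp: edge_set_def)

lemma edge_set_mono:
  "S \<subseteq> V \<Longrightarrow> (\<And>u v. u \<in> S \<Longrightarrow> v \<in> S \<Longrightarrow> F u v \<Longrightarrow> E u v) \<Longrightarrow> edge_set S F \<subseteq> edge_set V E"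
  unfolding edge_set_def by blast

lemma edge_in_edge_set: "u \<in> V \<Longrightarrow> v \<in> V \<Longrightarrow> E u v \<Longrightarrow> {u, v} \<in> edge_set V E"
  unfolding edge_set_def by blast

lemma num_edges_subgraph_add:
  assumes sg: "simple_graph V E" and S: "S \<subseteq> V"
    and F: "\<And>u v. u \<in> S \<Longrightarrow> v \<in> S \<Longrightarrow> F u v \<Longrightarrow> E u v"
    and b: "b \<notin> S" and P: "\<And>p. p \<in> P \<Longrightarrow> E b p"
  shows "num_edges S F + card P \<le> num_edges V E"
proof -
  define D where "D = (\<lambda>p. {b, p}) ` P"
  have fin: "finite (edge_set V E)" using finite_edge_set[OF simple_graph_finite[OF sg]] .
  have sub: "edge_set S F \<subseteq> edge_set V E" using edge_set_mono[OF S F] .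
  have DV: "D \<subseteq> edge_set V E" unfolding D_def
    using P simple_graphD(1,2)[OF sg] by (blast intro: edge_in_edge_set)
  have "D \<inter> edge_set S F = {}"
    unfolding D_def edge_set_def using b by (blast dest: doubleton_eq_iff[THEN iffD1])
  then have "card (edge_set S F) + card D = card (edge_set S F \<union> D)"
    using finite_subset[OF sub fin] finite_subset[OF DV fin] by (simp add: card_Un_disjoint Int_commute)
  also have "\<dots> \<le> card (edge_set V E)" using fin sub DV by (intro card_mono) auto
  finally have "num_edges S F + card D \<le> num_edges V E" by (simp add: num_edges_def)
  moreover have "inj_on (\<lambda>p. {b, p}) P" by (rule inj_onI) (auto simp: doubleton_eq_iff)
  then have "card D = card P" unfolding D_def by (rule card_image)
  ultimately show ?thesis by simp
qed

section \<open>Dynamic colorings\<close>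

definition dynamic_4_coloring_on :: "'a set \<Rightarrow> ('a \<Rightarrow> 'a \<Rightarrow> bool) \<Rightarrow> ('a \<Rightarrow> nat) \<Rightarrow> 'a set \<Rightarrow> bool" where
  "dynamic_4_coloring_on H F c U \<longleftrightarrow>
     (\<forall>v\<in>H. c v < 4) \<and> proper_coloring H F c \<and> (\<forall>v\<in>U. happy H F c v)"

lemma dynamically_4_colorable_iff:
  "dynamically_4_colorable H F \<longleftrightarrow> (\<exists>c. dynamic_4_coloring_on H F c H)"
  by (simp add: dynamically_4_colorable_def dynamic_4_coloring_def dynamic_4_coloring_on_def)

lemma dynamic_4_coloring_onD:
  assumes "dynamic_4_coloring_on H F c U"
  shows "v \<in> H \<Longrightarrow> c v < 4" and "u \<in> H \<Longrightarrow> v \<in> H \<Longrightarrow> F u v \<Longrightarrow> c u \<noteq> c v"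
    and "v \<in> U \<Longrightarrow> happy H F c v"
  using assms by (auto simp: dynamic_4_coloring_on_def proper_coloring_def)

lemma dynamic_4_coloring_on_subset:
  "dynamic_4_coloring_on H F c U \<Longrightarrow> U' \<subseteq> U \<Longrightarrow> dynamic_4_coloring_on H F c U'"
  by (auto simp: dynamic_4_coloring_on_def)

lemma happyI: "a \<in> H \<Longrightarrow> b \<in> H \<Longrightarrow> F u a \<Longrightarrow> F u b \<Longrightarrow> c a \<noteq> c b \<Longrightarrow> happy H F c u"
  unfolding happy_def neighbors_def by blast

lemma happy_single_neighbor:
  assumes "\<And>z. z \<in> H \<Longrightarrow> F u z \<Longrightarrow> z = a"
  shows "happy H F c u"
proof -
  have "neighbors H F u \<subseteq> {a}" using assms by (auto simp: neighbors_def)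
  then have "card (neighbors H F u) \<le> card {a}" by (intro card_mono) auto
  then show ?thesis by (simp add: happy_def)
qed

lemma happyD:
  assumes "happy H F c u" "finite H" "a \<in> H" "b \<in> H" "a \<noteq> b" "F u a" "F u b"
  shows "\<exists>p\<in>H. \<exists>q\<in>H. F u p \<and> F u q \<and> c p \<noteq> c q"
proof -
  have "finite (neighbors H F u)" using assms(2) by (simp add: neighbors_def)
  then have "\<not> card (neighbors H F u) \<le> 1"
    using assms(3-7) card_le_Suc0_iff_eq by (fastforce simp: neighbors_def)
  then show ?thesis using assms(1) unfolding happy_def neighbors_def by blast
qed

lemma happy_induced_pair:
  assumes "dynamic_4_coloring_on A (induced A E) c U" "x \<in> U" "x \<in> A" "finite A"
    "a \<in> A" "b \<in> A" "a \<noteq> b" "E x a" "E x b"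
  shows "\<exists>s1\<in>A. \<exists>s2\<in>A. E x s1 \<and> E x s2 \<and> c s1 \<noteq> c s2"
  using happyD[OF dynamic_4_coloring_onD(3)[OF assms(1,2)] assms(4-7)] assms(3,5,6,8,9)
  by (auto simp: induced_def)

lemma happy_cong:
  assumes "happy H F c x" "neighbors V' E' x = neighbors H F x"
    "\<And>z. z \<in> neighbors H F x \<Longrightarrow> c' z = c z"
  shows "happy V' E' c' x"
  using assms unfolding happy_def by auto

lemma dynamic_4_coloring_on_induced_subset:
  assumes c: "dynamic_4_coloring_on S' (induced S' E) c U" and "S \<subseteq> S'" "U' \<subseteq> U" "U' \<subseteq> S"
    and nbrs: "\<And>u z. u \<in> U' \<Longrightarrow> E u z \<Longrightarrow> z \<in> S' \<Longrightarrow> z \<in> S"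
  shows "dynamic_4_coloring_on S (induced S E) c U'"
  unfolding dynamic_4_coloring_on_def proper_coloring_def
proof (intro conjI ballI impI)
  show "c v < 4" if "v \<in> S" for v using dynamic_4_coloring_onD(1)[OF c] that assms(2) by blast
  show "c u \<noteq> c v" if "u \<in> S" "v \<in> S" "induced S E u v" for u v
    using dynamic_4_coloring_onD(2)[OF c] that assms(2) by (auto simp: induced_def)
  show "happy S (induced S E) c u" if u: "u \<in> U'" for u
  proof (rule happy_cong[OF dynamic_4_coloring_onD(3)[OF c]])
    show "u \<in> U" using u assms(3) by blast
    show "neighbors S (induced S E) u = neighbors S' (induced S' E) u"
      using u nbrs assms(2,4) by (auto simp: neighbors_def induced_def)
  qed simp
qed

definition color_perm :: "(nat \<Rightarrow> nat) \<Rightarrow> bool" where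
  "color_perm p \<longleftrightarrow> inj_on p {..<4} \<and> p ` {..<4} \<subseteq> {..<4}"

lemma dynamic_4_coloring_on_perm:
  assumes c: "dynamic_4_coloring_on H F c U" and p: "color_perm p"
  shows "dynamic_4_coloring_on H F (p \<circ> c) U"
proof -
  have same: "p (c u) = p (c v) \<longleftrightarrow> c u = c v" if "u \<in> H" "v \<in> H" for u v
    using p dynamic_4_coloring_onD(1)[OF c] that by (auto simp: color_perm_def inj_on_def)
  show ?thesis unfolding dynamic_4_coloring_on_def proper_coloring_def
  proof (intro conjI ballI impI)
    show "(p \<circ> c) v < 4" if "v \<in> H" for v
      using p dynamic_4_coloring_onD(1)[OF c that] by (auto simp: color_perm_def)
    show "(p \<circ> c) u \<noteq> (p \<circ> c) v" if "u \<in> H" "v \<in> H" "F u v" for u v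
      using same that dynamic_4_coloring_onD(2)[OF c] by simp
    show "happy H F (p \<circ> c) v" if "v \<in> U" for v
      using dynamic_4_coloring_onD(3)[OF c that] same unfolding happy_def neighbors_def by auto
  qed
qed

lemma lessThan_4: "{..<4::nat} = {0, 1, 2, 3}"
  by auto

lemma color_perm_swap: "a < 4 \<Longrightarrow> b < 4 \<Longrightarrow> color_perm (id(a := b, b := a))"
  by (auto simp: color_perm_def inj_on_def)

lemma color_perm_comp: "color_perm p \<Longrightarrow> color_perm q \<Longrightarrow> color_perm (p \<circ> q)"
  by (auto simp: color_perm_def intro: comp_inj_on inj_on_subset)

lemma color_perm_to_0: "a < 4 \<Longrightarrow> \<exists>p. color_perm p \<and> p a = 0"
  using color_perm_swap[of a 0] by force

lemma color_perm_to_01: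
  assumes "a < 4" "b < 4" "a \<noteq> b"
  shows "\<exists>p. color_perm p \<and> p a = 0 \<and> p b = 1"
proof -
  define q where "q = id(a := 0, 0 := a)"
  have q: "color_perm q" "q a = 0" "q b \<noteq> 0" "q b < 4"
    using assms color_perm_swap[of a 0] by (auto simp: q_def)
  define r where "r = id(q b := 1, 1 := q b)"
  have "color_perm (r \<circ> q)" using q color_perm_swap[of "q b" 1] by (auto simp: r_def intro: color_perm_comp)
  moreover have "(r \<circ> q) a = 0" "(r \<circ> q) b = 1" using q by (auto simp: r_def)
  ultimately show ?thesis by blast
qed

lemma color_perm_to_012:
  assumes "a < 4" "b < 4" "d < 4" "a \<noteq> b" "a \<noteq> d" "b \<noteq> d"
  shows "\<exists>p. color_perm p \<and> p a = 0 \<and> p b = 1 \<and> p d = 2"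
proof -
  obtain q where q: "color_perm q" "q a = 0" "q b = 1" using color_perm_to_01 assms by blast
  have "inj_on q {..<4}" "q d < 4" using q(1) assms(3) by (auto simp: color_perm_def)
  then have qd: "q d < 4" "q d \<noteq> 0" "q d \<noteq> 1"
    using q(2,3) assms by (metis inj_on_contraD lessThan_iff)+
  define r where "r = id(q d := 2, 2 := q d)"
  have "color_perm (r \<circ> q)" using q qd color_perm_swap[of "q d" 2] by (auto simp: r_def intro: color_perm_comp)
  moreover have "(r \<circ> q) a = 0" "(r \<circ> q) b = 1" "(r \<circ> q) d = 2" using q qd by (auto simp: r_def)
  ultimately show ?thesis by blast
qed

lemma color_perm_normalize_012:
  assumes c: "dynamic_4_coloring_on S F c U" and "x \<in> S" "y \<in> S" "w \<in> S"
    and "c x \<noteq> c y" "c x \<noteq> c w" "c y \<noteq> c w"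
  shows "\<exists>d. dynamic_4_coloring_on S F d U \<and> d x = 0 \<and> d y = 1 \<and> d w = 2"
proof -
  obtain p where "color_perm p" "p (c x) = 0" "p (c y) = 1" "p (c w) = 2"
    using color_perm_to_012 dynamic_4_coloring_onD(1)[OF c] assms(2-7) by metis
  then show ?thesis using dynamic_4_coloring_on_perm[OF c] by (intro exI[of _ "p \<circ> c"]) simp
qed

text \<open>Each constraint \<open>p s \<noteq> r\<close> excludes only one of the three rotations of \<open>{1, 2, 3}\<close>.\<close>

lemma color_perm_avoid:
  assumes "s1 \<in> {1, 2, 3}" "s2 \<in> {1, 2, 3}" "r1 \<in> {1, 2, 3}" "r2 \<in> {1, 2, 3::nat}"
  shows "\<exists>p. color_perm p \<and> p 0 = 0 \<and> p s1 \<noteq> r1 \<and> p s2 \<noteq> r2"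
proof -
  define rot1 :: "nat \<Rightarrow> nat" where "rot1 = id(1 := 2, 2 := 3, 3 := 1)"
  define rot2 :: "nat \<Rightarrow> nat" where "rot2 = id(1 := 3, 2 := 1, 3 := 2)"
  have perms: "color_perm id" "color_perm rot1" "color_perm rot2"
    by (auto simp: color_perm_def rot1_def rot2_def inj_on_def lessThan_4)
  have "(s1 \<noteq> r1 \<and> s2 \<noteq> r2) \<or> (rot1 s1 \<noteq> r1 \<and> rot1 s2 \<noteq> r2) \<or> (rot2 s1 \<noteq> r1 \<and> rot2 s2 \<noteq> r2)"
    using assms by (elim insertE emptyE) (simp_all add: rot1_def rot2_def)
  moreover have "rot1 0 = 0" "rot2 0 = 0" by (simp_all add: rot1_def rot2_def)
  ultimately show ?thesis using perms by (metis id_apply)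
qed

lemma exists_color_avoiding: "\<exists>t::nat. t < 4 \<and> t \<noteq> a \<and> t \<noteq> b \<and> t \<noteq> c"
  by presburger

lemma dynamically_4_colorable_card_le_4:
  assumes sg: "simple_graph H F" and card: "card H \<le> 4"
  shows "dynamically_4_colorable H F"
proof -
  obtain h where h: "bij_betw h H {0..<card H}"
    using ex_bij_betw_finite_nat[OF simple_graph_finite[OF sg]] by blast
  then have inj: "inj_on h H" and range: "\<forall>v\<in>H. h v < 4"
    using card bij_betwE[OF h] by (auto simp: bij_betw_def)
  have "dynamic_4_coloring_on H F h H"
    unfolding dynamic_4_coloring_on_def proper_coloring_def
  proof (intro conjI ballI impI)
    show "h u \<noteq> h v" if "u \<in> H" "v \<in> H" "F u v" for u v
      using inj that simple_graphD(3)[OF sg that(3)] by (auto simp: inj_on_def)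
    show "happy H F h v" for v
    proof (cases "card (neighbors H F v) \<le> 1")
      case False
      then obtain a b where "a \<in> neighbors H F v" "b \<in> neighbors H F v" "a \<noteq> b"
        using card_le_Suc0_iff_eq[of "neighbors H F v"] simple_graph_finite[OF sg]
        by (auto simp: neighbors_def)
      then show ?thesis using inj by (auto simp: inj_on_def neighbors_def intro: happyI)
    qed (simp add: happy_def)
  qed (use range in auto)
  then show ?thesis by (auto simp: dynamically_4_colorable_iff)
qed

section \<open>The 5-cycle\<close>

lemma less_5_cases: "i < 5 \<Longrightarrow> i = 0 \<or> i = 1 \<or> i = 2 \<or> i = 3 \<or> i = (4::nat)"
  by presburger

lemma iso_C5_neighbors:
  assumes "simple_graph H F" "iso_C5 H F" "u \<in> H"
  shows "\<exists>a b. a \<noteq> b \<and> (\<forall>z. F u z \<longleftrightarrow> z = a \<or> z = b)"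
proof -
  obtain f :: "nat \<Rightarrow> _" where bij: "bij_betw f {0..<5} H" and
    adj: "\<forall>i<5. \<forall>j<5. F (f i) (f j) \<longleftrightarrow> (j = (i + 1) mod 5 \<or> i = (j + 1) mod 5)"
    using assms(2) unfolding iso_C5_def by blast
  obtain i where i: "i < 5" "u = f i" using bij assms(3) by (auto simp: bij_betw_def)
  have "(i + 1) mod 5 \<noteq> (i + 4) mod 5" using less_5_cases[OF i(1)] by auto
  then have "f ((i + 1) mod 5) \<noteq> f ((i + 4) mod 5)"
    using bij by (intro inj_on_contraD[of f "{0..<5}"]) (auto simp: bij_betw_def)
  moreover have "F u z \<longleftrightarrow> z = f ((i + 1) mod 5) \<or> z = f ((i + 4) mod 5)" for z
  proof
    assume "F u z"
    then have "z \<in> f ` {0..<5}" using bij simple_graphD(2)[OF assms(1)] by (simp add: bij_betw_def)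
    then obtain j where j: "j < 5" "z = f j" by auto
    then have "j = (i + 1) mod 5 \<or> i = (j + 1) mod 5" using adj i \<open>F u z\<close> by auto
    then have "j = (i + 1) mod 5 \<or> j = (i + 4) mod 5"
      using less_5_cases[OF i(1)] less_5_cases[OF j(1)] by auto
    then show "z = f ((i + 1) mod 5) \<or> z = f ((i + 4) mod 5)" using j by auto
  next
    have "i = ((i + 4) mod 5 + 1) mod 5" using less_5_cases[OF i(1)] by auto
    then show "z = f ((i + 1) mod 5) \<or> z = f ((i + 4) mod 5) \<Longrightarrow> F u z"
      using adj i by (metis mod_less_divisor zero_less_numeral)
  qed
  ultimately show ?thesis by blast
qed

lemma iso_C5_card: "iso_C5 H F \<Longrightarrow> card H = 5"
  unfolding iso_C5_def by (metis bij_betw_same_card card_atLeastLessThan diff_zero)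

lemma C5_pendant_pattern:
  fixes i k :: nat
  defines "col j \<equiv> [0, 1, 2, 3, 1 :: nat] ! ((j + 5 - k) mod 5)"
  assumes "i < 5" "k < 5"
  shows "col i \<noteq> col ((i + 1) mod 5)"
    and "i \<noteq> k \<Longrightarrow> col ((i + 1) mod 5) \<noteq> col ((i + 4) mod 5)"
    and "col k = 0" and "col ((k + 1) mod 5) = 1" and "col i < 4"
  using less_5_cases[OF assms(2)] less_5_cases[OF assms(3)] unfolding col_def
  by (elim disjE; simp)+

lemma iso_C5_degree2_path:
  assumes sg: "simple_graph H F" and c5: "iso_C5 H F" and H: "H = {a1, a2, x, y, w}"
    and a: "a1 \<noteq> a2" "a1 \<notin> {x, y, w}" "a2 \<notin> {x, y, w}" and w: "\<And>z. F w z \<longleftrightarrow> z = x \<or> z = y"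
  shows "\<exists>p q. {p, q} = {x, y} \<and> (\<forall>z. F a1 z \<longleftrightarrow> z = p \<or> z = a2) \<and> (\<forall>z. F a2 z \<longleftrightarrow> z = a1 \<or> z = q)"
proof -
  have sym: "F u v \<Longrightarrow> F v u" for u v using simple_graphD(4)[OF sg] .
  have deg2: "\<exists>\<alpha> \<beta>. \<alpha> \<noteq> \<beta> \<and> (\<forall>z. F u z \<longleftrightarrow> z = \<alpha> \<or> z = \<beta>)" if "u \<in> H" for u
    using iso_C5_neighbors[OF sg c5 that] .
  have no3: "s1 = s2 \<or> s1 = s3 \<or> s2 = s3" if "u \<in> H" "F u s1" "F u s2" "F u s3" for u s1 s2 s3
    using deg2[OF that(1)] that(2-4) by metis
  have wx: "F x w" "F y w" using w sym by blast+
  have nbr_a: "z \<in> {x, y, a'}" if aa': "a \<in> {a1, a2}" "a' \<in> {a1, a2}" "a \<noteq> a'" and az: "F a z" for a a' z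
  proof -
    have "z \<in> H" "z \<noteq> a" using simple_graphD(2,3)[OF sg az] by auto
    moreover have "z \<noteq> w" using w[of a] sym[OF az] aa'(1) a by auto
    ultimately show ?thesis using H aa' by auto
  qed
  have "F a1 a2"
  proof (rule ccontr)
    assume n12: "\<not> F a1 a2"
    have "F a x \<and> F a y" if a': "a \<in> {a1, a2}" for a
    proof -
      obtain \<alpha> \<beta> where ab: "\<alpha> \<noteq> \<beta>" "F a \<alpha>" "F a \<beta>" using deg2[of a] a' H by blast
      have "z \<in> {x, y}" if "F a z" for z
        using nbr_a[of a1 a2 z] nbr_a[of a2 a1 z] a' that a(1) n12 sym by auto
      then show ?thesis using ab by blast
    qed
    then have "F x a1" "F x a2" using sym by blast+
    then show False using no3[of x w a1 a2] wx H a by auto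
  qed
  have thread: "\<exists>p\<in>{x, y}. \<forall>z. F a z \<longleftrightarrow> z = p \<or> z = a'"
    if aa': "a \<in> {a1, a2}" "a' \<in> {a1, a2}" "a \<noteq> a'" "F a a'" for a a'
  proof -
    obtain \<alpha> \<beta> where ab: "\<alpha> \<noteq> \<beta>" "\<forall>z. F a z \<longleftrightarrow> z = \<alpha> \<or> z = \<beta>" using deg2[of a] aa'(1) H by blast
    have "\<exists>p. (\<forall>z. F a z \<longleftrightarrow> z = p \<or> z = a') \<and> p \<noteq> a'"
    proof (cases "a' = \<alpha>")
      case True
      then show ?thesis using ab by (intro exI[of _ \<beta>]) auto
    next
      case False
      then have "a' = \<beta>" using ab aa'(4) by blast
      then show ?thesis using ab by (intro exI[of _ \<alpha>]) auto
    qed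
    then obtain p where p: "\<forall>z. F a z \<longleftrightarrow> z = p \<or> z = a'" "p \<noteq> a'" by blast
    then have "p \<in> {x, y}" using nbr_a[OF aa'(1-3), of p] by blast
    then show ?thesis using p(1) by blast
  qed
  obtain p where p: "p \<in> {x, y}" "\<forall>z. F a1 z \<longleftrightarrow> z = p \<or> z = a2"
    using thread[of a1 a2] a(1) \<open>F a1 a2\<close> by auto
  obtain q where q: "q \<in> {x, y}" "\<forall>z. F a2 z \<longleftrightarrow> z = a1 \<or> z = q"
    using thread[of a2 a1] a(1) sym[OF \<open>F a1 a2\<close>] by (auto simp: disj_commute)
  have "p \<noteq> q"
  proof
    assume "p = q"
    then have "F p a1" "F p a2" "F p w" using p q wx sym by auto
    then have "a1 = a2 \<or> a1 = w \<or> a2 = w" using no3[of p a1 a2 w] p H by blast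
    then show False using a by blast
  qed
  then have "{p, q} = {x, y}" using p(1) q(1) by auto
  then show ?thesis using p(2) q(2) by blast
qed

lemma iso_C5_induced_cycle:
  assumes "iso_C5 S (induced S E)"
  obtains f :: "nat \<Rightarrow> 'a" where "bij_betw f {0..<5} S"
    and "\<And>i j. i < 5 \<Longrightarrow> j < 5 \<Longrightarrow> E (f i) (f j) \<longleftrightarrow> j = (i + 1) mod 5 \<or> i = (j + 1) mod 5"
    and "\<And>i. i < 5 \<Longrightarrow> E (f i) (f ((i + 1) mod 5)) \<and> E (f i) (f ((i + 4) mod 5))"
proof -
  obtain f :: "nat \<Rightarrow> _" where f: "bij_betw f {0..<5} S" and
    adj': "\<forall>i<5. \<forall>j<5. induced S E (f i) (f j) \<longleftrightarrow> (j = (i + 1) mod 5 \<or> i = (j + 1) mod 5)"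
    using assms unfolding iso_C5_def by blast
  have adj: "E (f i) (f j) \<longleftrightarrow> j = (i + 1) mod 5 \<or> i = (j + 1) mod 5" if "i < 5" "j < 5" for i j
    using adj' bij_betwE[OF f] that by (simp add: induced_def)
  show ?thesis
  proof (rule that[OF f adj])
    fix i :: nat assume "i < 5"
    moreover have "i = ((i + 4) mod 5 + 1) mod 5" using less_5_cases[OF \<open>i < 5\<close>] by auto
    ultimately show "E (f i) (f ((i + 1) mod 5)) \<and> E (f i) (f ((i + 4) mod 5))" using adj by simp
  qed
qed

text \<open>The 5-cycle with a pendant vertex \<open>b\<close> at \<open>v\<close>: color the cycle \<open>0, 1, 2, 3, 1\<close> starting
  at \<open>v\<close> and give \<open>b\<close> color \<open>2\<close>.\<close>

lemma dynamically_4_colorable_C5_pendant: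
  assumes sg: "simple_graph V E" and b: "b \<in> V" and leaf: "\<And>z. E b z \<longleftrightarrow> z = v"
    and c5: "iso_C5 (V - {b}) (induced (V - {b}) E)"
  shows "dynamically_4_colorable V E"
proof -
  let ?S = "V - {b}"
  obtain f :: "nat \<Rightarrow> 'a" where f: "bij_betw f {0..<5} ?S"
    and adj: "\<And>i j. i < 5 \<Longrightarrow> j < 5 \<Longrightarrow> E (f i) (f j) \<longleftrightarrow> j = (i + 1) mod 5 \<or> i = (j + 1) mod 5"
    and next_adj: "\<And>i. i < 5 \<Longrightarrow> E (f i) (f ((i + 1) mod 5)) \<and> E (f i) (f ((i + 4) mod 5))"
    using iso_C5_induced_cycle[OF c5] by blast
  have fS: "f i \<in> ?S" if "i < 5" for i using bij_betwE[OF f] that by simp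
  have onto: "\<exists>i<5. z = f i" if "z \<in> ?S" for z
  proof -
    have "z \<in> f ` {0..<5}" using f that by (simp add: bij_betw_def)
    then show ?thesis by auto
  qed
  have vS: "v \<in> ?S" using leaf simple_graphD[OF sg] by blast
  obtain k where k: "k < 5" "f k = v" using onto[OF vS] by blast
  define col where "col j = [0, 1, 2, 3, 1 :: nat] ! ((j + 5 - k) mod 5)" for j
  note pattern = C5_pendant_pattern[OF _ k(1), folded col_def]
  define c where "c z = (if z = b then 2 else col (inv_into {0..<5} f z))" for z
  have c_f: "c (f i) = col i" if "i < 5" for i
    using fS[OF that] f that by (simp add: c_def bij_betw_def inv_into_f_f)
  have cb: "c b = 2" by (simp add: c_def)
  have cv: "c v = 0" using c_f k pattern(3) by metis
  have "dynamic_4_coloring_on V E c V"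
    unfolding dynamic_4_coloring_on_def proper_coloring_def
  proof (intro conjI ballI impI)
    show "c z < 4" if "z \<in> V" for z
      using that onto pattern(5) c_f by (cases "z = b") (auto simp: cb, metis)
    show "c x \<noteq> c y" if "x \<in> V" "y \<in> V" "E x y" for x y
    proof -
      have "c x \<noteq> c y" if "x = b \<or> y = b" "E x y" for x y
      proof -
        have "x = b \<and> y = v \<or> y = b \<and> x = v"
          using that leaf[of x] leaf[of y] simple_graphD(4)[OF sg, of x y] by blast
        then show ?thesis using cb cv by auto
      qed
      moreover have "c x \<noteq> c y" if xy: "x \<noteq> b" "y \<noteq> b"
      proof -
        obtain i j where "i < 5" "j < 5" "x = f i" "y = f j" using onto \<open>x \<in> V\<close> \<open>y \<in> V\<close> xy by blast
        then show ?thesis using adj \<open>E x y\<close> c_f pattern(1) by (metis mod_less_divisor zero_less_numeral)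
      qed
      ultimately show ?thesis using \<open>E x y\<close> by blast
    qed
    show "happy V E c x" if x: "x \<in> V" for x
    proof (cases "x = b")
      case True
      then show ?thesis using leaf by (auto intro: happy_single_neighbor)
    next
      case False
      then obtain i where i: "i < 5" "x = f i" using onto x by blast
      show ?thesis
      proof (cases "i = k")
        case True
        then have "E x b" using leaf simple_graphD(4)[OF sg] i k by metis
        then show ?thesis using next_adj[OF i(1)] i True fS b pattern(4) c_f cb
          by (intro happyI[of "f ((i + 1) mod 5)" V b]) auto
      next
        case False
        then show ?thesis using next_adj[OF i(1)] i fS pattern(2)[OF i(1) False] c_f
          by (intro happyI[of "f ((i + 1) mod 5)" V "f ((i + 4) mod 5)"]) auto
      qed
    qed
  qed
  then show ?thesis by (auto simp: dynamically_4_colorable_iff)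
qed

definition map_adj :: "('a \<Rightarrow> 'b) \<Rightarrow> 'a set \<Rightarrow> ('a \<Rightarrow> 'a \<Rightarrow> bool) \<Rightarrow> 'b \<Rightarrow> 'b \<Rightarrow> bool" where
  "map_adj h H F p q \<longleftrightarrow> (\<exists>u\<in>H. \<exists>v\<in>H. p = h u \<and> q = h v \<and> F u v)"

context
  fixes h :: "'a \<Rightarrow> 'b" and H :: "'a set" and F :: "'a \<Rightarrow> 'a \<Rightarrow> bool"
  assumes inj: "inj_on h H"
begin

lemma map_adj_image: "u \<in> H \<Longrightarrow> v \<in> H \<Longrightarrow> map_adj h H F (h u) (h v) \<longleftrightarrow> F u v"
  using inj by (auto simp: map_adj_def inj_on_def)

lemma map_adjE:
  assumes "map_adj h H F p q"
  obtains u v where "u \<in> H" "v \<in> H" "p = h u" "q = h v" "F u v"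
  using assms by (auto simp: map_adj_def)

lemma simple_graph_map:
  assumes "simple_graph H F"
  shows "simple_graph (h ` H) (map_adj h H F)"
proof (rule simple_graphI)
  show "finite (h ` H)" using simple_graph_finite[OF assms] by simp
  fix p q assume "map_adj h H F p q"
  then obtain u v where uv: "u \<in> H" "v \<in> H" "p = h u" "q = h v" "F u v" by (rule map_adjE)
  moreover have "u \<noteq> v" "F v u" using simple_graphD(3,4)[OF assms uv(5)] by auto
  ultimately show "p \<in> h ` H \<and> q \<in> h ` H \<and> p \<noteq> q \<and> map_adj h H F q p"
    by (simp add: map_adj_image inj_on_eq_iff[OF inj])
qed

lemma connected_graph_map:
  assumes "simple_graph H F" "connected_graph H F"
  shows "connected_graph (h ` H) (map_adj h H F)"
proof -
  have "connected_on (\<Union>u\<in>H. {h u}) (map_adj h H F)"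
    using assms simple_graph_symp[OF simple_graph_map]
    by (intro connected_on_UN[where VH=H and F=F])
      (auto simp: connected_graph_def map_adj_image connected_on_singleton)
  moreover have "(\<Union>u\<in>H. {h u}) = h ` H" by blast
  ultimately show ?thesis by (simp add: connected_graph_def)
qed

lemma has_K5_minor_map:
  assumes "simple_graph H F" "has_K5_minor (h ` H) (map_adj h H F)"
  shows "has_K5_minor H F"
proof (rule has_K5_minor_branch_map[OF assms(2), where \<phi>="\<lambda>p. {the_inv_into H h p}"])
  show "symp F" using simple_graph_symp[OF assms(1)] .
qed (use inj in \<open>auto simp: connected_on_singleton the_inv_into_f_f map_adj_def
        dest: the_inv_into_into[OF inj] f_the_inv_into_f[OF inj]\<close>)

lemma iso_C5_map:
  assumes "iso_C5 (h ` H) (map_adj h H F)"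
  shows "iso_C5 H F"
proof -
  obtain f :: "nat \<Rightarrow> 'b" where f: "bij_betw f {0..<5} (h ` H)" and
    adj: "\<forall>i<5. \<forall>j<5. map_adj h H F (f i) (f j) \<longleftrightarrow> (j = (i + 1) mod 5 \<or> i = (j + 1) mod 5)"
    using assms unfolding iso_C5_def by blast
  let ?g = "the_inv_into H h"
  have g: "bij_betw ?g (h ` H) H" using bij_betw_the_inv_into[OF inj_on_imp_bij_betw[OF inj]] .
  have "map_adj h H F (f i) (f j) \<longleftrightarrow> F (?g (f i)) (?g (f j))" if "i < 5" "j < 5" for i j
  proof -
    have "f i \<in> h ` H" "f j \<in> h ` H" using f that by (auto simp: bij_betw_def)
    then obtain u v where "u \<in> H" "v \<in> H" "f i = h u" "f j = h v" by blast
    then show ?thesis by (simp add: map_adj_image the_inv_into_f_f[OF inj])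
  qed
  then show ?thesis unfolding iso_C5_def using bij_betw_trans[OF f g] adj by (auto intro!: exI[of _ "?g \<circ> f"])
qed

lemma num_edges_map: "num_edges (h ` H) (map_adj h H F) = num_edges H F"
proof -
  have "edge_set (h ` H) (map_adj h H F) = (\<lambda>e. h ` e) ` edge_set H F"
  proof
    show "edge_set (h ` H) (map_adj h H F) \<subseteq> (\<lambda>e. h ` e) ` edge_set H F"
    proof
      fix e assume "e \<in> edge_set (h ` H) (map_adj h H F)"
      then obtain p q where "e = {p, q}" "map_adj h H F p q" unfolding edge_set_def by blast
      then obtain u v where "u \<in> H" "v \<in> H" "e = h ` {u, v}" "F u v" by (auto elim: map_adjE)
      then show "e \<in> (\<lambda>e. h ` e) ` edge_set H F" unfolding edge_set_def by blast
    qed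
    show "(\<lambda>e. h ` e) ` edge_set H F \<subseteq> edge_set (h ` H) (map_adj h H F)"
      unfolding edge_set_def using map_adj_image by fastforce
  qed
  moreover have "inj_on (\<lambda>e. h ` e) (edge_set H F)"
  proof (rule inj_onI)
    fix e1 e2 assume "e1 \<in> edge_set H F" "e2 \<in> edge_set H F" "h ` e1 = h ` e2"
    moreover have "e1 \<subseteq> H" "e2 \<subseteq> H" using calculation(1,2) unfolding edge_set_def by auto
    ultimately show "e1 = e2" using inj_on_image_eq_iff[OF inj] by blast
  qed
  ultimately show ?thesis by (simp add: num_edges_def card_image)
qed

lemma dynamically_4_colorable_map:
  assumes "dynamically_4_colorable (h ` H) (map_adj h H F)"
  shows "dynamically_4_colorable H F"
proof -
  obtain c where c: "dynamic_4_coloring_on (h ` H) (map_adj h H F) c (h ` H)"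
    using assms by (auto simp: dynamically_4_colorable_iff)
  have nbrs: "neighbors (h ` H) (map_adj h H F) (h u) = h ` neighbors H F u" if "u \<in> H" for u
    using that inj by (auto simp: neighbors_def map_adj_image inj_on_eq_iff elim!: map_adjE)
  have "dynamic_4_coloring_on H F (c \<circ> h) H"
    unfolding dynamic_4_coloring_on_def proper_coloring_def
  proof (intro conjI ballI impI)
    show "(c \<circ> h) v < 4" if "v \<in> H" for v using dynamic_4_coloring_onD(1)[OF c] that by simp
    show "(c \<circ> h) u \<noteq> (c \<circ> h) v" if "u \<in> H" "v \<in> H" "F u v" for u v
    proof -
      have "map_adj h H F (h u) (h v)" using that map_adj_image by blast
      then show ?thesis using dynamic_4_coloring_onD(2)[OF c] that by simp
    qed
    show "happy H F (c \<circ> h) u" if u: "u \<in> H" for u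
    proof -
      have "inj_on h (neighbors H F u)" using inj by (rule inj_on_subset) (auto simp: neighbors_def)
      then have "card (neighbors (h ` H) (map_adj h H F) (h u)) = card (neighbors H F u)"
        unfolding nbrs[OF u] by (rule card_image)
      moreover have "happy (h ` H) (map_adj h H F) c (h u)" using dynamic_4_coloring_onD(3)[OF c] u by simp
      ultimately show ?thesis unfolding happy_def nbrs[OF u] by auto
    qed
  qed
  then show ?thesis by (auto simp: dynamically_4_colorable_iff)
qed

end

section \<open>Adding a pendant vertex\<close>

lemma has_K5_minor_Diff_leaf:
  assumes K: "has_K5_minor V E" and sym: "symp E" and leaf: "\<And>z. E x z \<Longrightarrow> z = y"
  shows "has_K5_minor (V - {x}) E"
proof -
  obtain B :: "nat \<Rightarrow> _" where
    B1: "\<forall>i<5. B i \<subseteq> V \<and> connected_on (B i) E" and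
    B2: "\<forall>i<5. \<forall>j<5. i \<noteq> j \<longrightarrow> B i \<inter> B j = {} \<and> (\<exists>u\<in>B i. \<exists>w\<in>B j. E u w)"
    using K unfolding has_K5_minor_def by blast
  have not_single: "B i \<noteq> {x}" if i: "i < 5" for i
  proof
    assume single: "B i = {x}"
    have "y \<in> B l" if l: "l < 5" "l \<noteq> i" for l
    proof -
      obtain u w where "u \<in> B i" "w \<in> B l" "E u w" using B2 i l by blast
      then show ?thesis using single leaf by auto
    qed
    moreover have "(i + 1) mod 5 < 5" "(i + 2) mod 5 < 5" "(i + 1) mod 5 \<noteq> i" "(i + 2) mod 5 \<noteq> i"
      "(i + 1) mod 5 \<noteq> (i + 2) mod 5" using less_5_cases[OF i] by (elim disjE; simp)+
    ultimately show False using B2 by blast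
  qed
  have yB: "y \<in> B i" if i: "i < 5" and x: "x \<in> B i" for i
  proof -
    obtain z where "z \<in> B i" "z \<noteq> x" using x not_single[OF i] by blast
    then show ?thesis using connected_on_has_neighbor[of "B i" E x z] B1 i x leaf by blast
  qed
  define B' where "B' i = B i - {x}" for i
  have "B' i \<subseteq> V - {x} \<and> connected_on (B' i) E" if i: "i < 5" for i
  proof (cases "x \<in> B i")
    case True
    then show ?thesis using B1 i connected_on_Diff_leaf[OF _ True not_single[OF i] _ sym] leaf
      unfolding B'_def by blast
  qed (use B1 i in \<open>auto simp: B'_def\<close>)
  then have "\<forall>i<5. B' i \<subseteq> V - {x} \<and> connected_on (B' i) E" by blast
  moreover have "B' i \<inter> B' j = {} \<and> (\<exists>u\<in>B' i. \<exists>w\<in>B' j. E u w)"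
    if ij: "i < 5" "j < 5" "i \<noteq> j" for i j
  proof -
    obtain u w where uw: "u \<in> B i" "w \<in> B j" "E u w" using B2 ij by blast
    have "u \<noteq> x \<and> w \<noteq> x"
    proof (intro conjI notI)
      assume "u = x"
      then have "w = y" "y \<in> B i" using leaf uw yB ij by auto
      then show False using B2 ij uw by blast
    next
      assume "w = x"
      then have "u = y" "y \<in> B j" using leaf sympD[OF sym uw(3)] uw yB ij by auto
      then show False using B2 ij uw by blast
    qed
    then show ?thesis using B2 ij uw unfolding B'_def by blast
  qed
  ultimately show ?thesis unfolding has_K5_minor_def by (intro exI[of _ B']) blast
qed

definition pendant_V :: "'b set \<Rightarrow> 'b option set" where
  "pendant_V H = insert None (Some ` H)"

definition pendant_E :: "('b \<Rightarrow> 'b \<Rightarrow> bool) \<Rightarrow> 'b \<Rightarrow> 'b option \<Rightarrow> 'b option \<Rightarrow> bool" where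
  "pendant_E F v p q = (case (p, q) of
     (None, Some b) \<Rightarrow> b = v | (Some a, None) \<Rightarrow> a = v | (Some a, Some b) \<Rightarrow> F a b | _ \<Rightarrow> False)"

lemma pendant_E_simps [simp]:
  "pendant_E F v None q \<longleftrightarrow> q = Some v"
  "pendant_E F v (Some a) None \<longleftrightarrow> a = v"
  "pendant_E F v (Some a) (Some b) \<longleftrightarrow> F a b"
  by (auto simp: pendant_E_def split: option.split)

context
  fixes H :: "'b set" and F and v
  assumes sg: "simple_graph H F" and vH: "v \<in> H"
begin

lemma simple_graph_pendant: "simple_graph (pendant_V H) (pendant_E F v)"
proof (rule simple_graphI)
  show "finite (pendant_V H)" unfolding pendant_V_def using simple_graph_finite[OF sg] by simp
  fix p q assume "pendant_E F v p q"
  then show "p \<in> pendant_V H \<and> q \<in> pendant_V H \<and> p \<noteq> q \<and> pendant_E F v q p"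
    using vH simple_graphD[OF sg] by (cases p; cases q) (auto simp: pendant_V_def)
qed

lemma connected_graph_pendant:
  assumes "connected_graph H F"
  shows "connected_graph (pendant_V H) (pendant_E F v)"
proof -
  have sym: "symp (pendant_E F v)" by (rule simple_graph_symp[OF simple_graph_pendant])
  have "connected_on (\<Union>a\<in>H. {Some a}) (pendant_E F v)"
    using assms sym by (intro connected_on_UN[where VH=H and F=F])
      (auto simp: connected_graph_def connected_on_singleton)
  moreover have "(\<Union>a\<in>H. {Some a}) = Some ` H" by blast
  ultimately have "connected_on (Some ` H \<union> {None}) (pendant_E F v)"
    using vH sym by (intro connected_on_Un_edge[OF _ connected_on_singleton, of _ _ "Some v"]) auto
  then show ?thesis by (simp add: connected_graph_def pendant_V_def)
qed

lemma has_K5_minor_pendant: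
  assumes "has_K5_minor (pendant_V H) (pendant_E F v)"
  shows "has_K5_minor H F"
proof -
  have "has_K5_minor (pendant_V H - {None}) (pendant_E F v)"
    using assms simple_graph_symp[OF simple_graph_pendant]
    by (rule has_K5_minor_Diff_leaf[where y="Some v"]) simp
  then show ?thesis
  proof (rule has_K5_minor_branch_map[where \<phi>="\<lambda>p. {the p}"])
    show "symp F" by (rule simple_graph_symp[OF sg])
  qed (auto simp: pendant_V_def connected_on_singleton)
qed

lemma not_iso_C5_pendant: "\<not> iso_C5 (pendant_V H) (pendant_E F v)"
proof
  assume "iso_C5 (pendant_V H) (pendant_E F v)"
  moreover have "None \<in> pendant_V H" by (simp add: pendant_V_def)
  ultimately obtain a b where "a \<noteq> b" "\<forall>z. pendant_E F v None z \<longleftrightarrow> z = a \<or> z = b"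
    using iso_C5_neighbors[OF simple_graph_pendant] by blast
  then show False by (metis pendant_E_simps(1))
qed

lemma num_edges_pendant: "num_edges (pendant_V H) (pendant_E F v) = num_edges H F + 1"
proof -
  have eq: "edge_set (pendant_V H) (pendant_E F v) =
      insert {None, Some v} ((\<lambda>e. Some ` e) ` edge_set H F)"
  proof
    show "edge_set (pendant_V H) (pendant_E F v) \<subseteq> insert {None, Some v} ((\<lambda>e. Some ` e) ` edge_set H F)"
    proof
      fix e assume "e \<in> edge_set (pendant_V H) (pendant_E F v)"
      then obtain p q where e: "e = {p, q}" "p \<in> pendant_V H" "q \<in> pendant_V H" "pendant_E F v p q"
        unfolding edge_set_def by blast
      show "e \<in> insert {None, Some v} ((\<lambda>e. Some ` e) ` edge_set H F)"
      proof (cases "p = None \<or> q = None")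
        case True
        then show ?thesis using e by (cases p; cases q) auto
      next
        case False
        then obtain a b where "p = Some a" "q = Some b" by auto
        then have "e = Some ` {a, b}" "{a, b} \<in> edge_set H F"
          using e unfolding pendant_V_def edge_set_def by auto
        then show ?thesis by blast
      qed
    qed
    have "{None, Some v} \<in> edge_set (pendant_V H) (pendant_E F v)"
      using vH by (intro edge_in_edge_set) (auto simp: pendant_V_def)
    moreover have "Some ` e \<in> edge_set (pendant_V H) (pendant_E F v)" if e: "e \<in> edge_set H F" for e
    proof -
      obtain a b where "e = {a, b}" "a \<in> H" "b \<in> H" "F a b" using e unfolding edge_set_def by blast
      then show ?thesis using edge_in_edge_set[of "Some a" _ "Some b"] by (auto simp: pendant_V_def)
    qed
    ultimately show "insert {None, Some v} ((\<lambda>e. Some ` e) ` edge_set H F) \<subseteq> edge_set (pendant_V H) (pendant_E F v)"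
      by blast
  qed
  have "inj_on (\<lambda>e. Some ` e) (edge_set H F)" by (rule inj_onI) (simp add: inj_image_eq_iff)
  moreover have "{None, Some v} \<notin> (\<lambda>e. Some ` e) ` edge_set H F" by auto
  ultimately show ?thesis unfolding num_edges_def eq
    using finite_edge_set[OF simple_graph_finite[OF sg]] by (simp add: card_image)
qed

lemma dynamic_4_coloring_on_pendant:
  assumes "dynamically_4_colorable (pendant_V H) (pendant_E F v)"
  shows "\<exists>c. dynamic_4_coloring_on H F c (H - {v})"
proof -
  obtain c where c: "dynamic_4_coloring_on (pendant_V H) (pendant_E F v) c (pendant_V H)"
    using assms by (auto simp: dynamically_4_colorable_iff)
  have SH: "Some a \<in> pendant_V H" if "a \<in> H" for a using that by (simp add: pendant_V_def)
  have "dynamic_4_coloring_on H F (c \<circ> Some) (H - {v})"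
    unfolding dynamic_4_coloring_on_def proper_coloring_def
  proof (intro conjI ballI impI)
    show "(c \<circ> Some) u < 4" if "u \<in> H" for u using dynamic_4_coloring_onD(1)[OF c SH[OF that]] by simp
    show "(c \<circ> Some) u \<noteq> (c \<circ> Some) w" if "u \<in> H" "w \<in> H" "F u w" for u w
      using dynamic_4_coloring_onD(2)[OF c SH SH] that by simp
    show "happy H F (c \<circ> Some) u" if u: "u \<in> H - {v}" for u
    proof -
      have nbrs: "neighbors (pendant_V H) (pendant_E F v) (Some u) = Some ` neighbors H F u"
        using u by (auto simp: neighbors_def pendant_V_def)
      have "happy (pendant_V H) (pendant_E F v) c (Some u)"
        using dynamic_4_coloring_onD(3)[OF c SH] u by simp
      then show ?thesis unfolding happy_def nbrs by (auto simp: card_image)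
    qed
  qed
  then show ?thesis by blast
qed

end

lemma dynamic_4_coloring_extend_leaf:
  assumes sg: "simple_graph V E" and b: "b \<in> V" and leaf: "\<And>z. E b z \<longleftrightarrow> z = v"
    and c: "dynamic_4_coloring_on (V - {b}) (induced (V - {b}) E) c (V - {b})"
    and w: "w \<in> V - {b}" "w \<noteq> v" "E v w"
  shows "dynamically_4_colorable V E"
proof -
  have sym: "E x y \<Longrightarrow> E y x" for x y using simple_graphD(4)[OF sg] .
  have vb: "v \<in> V - {b}" using leaf simple_graphD[OF sg] by blast
  obtain t where t: "t < 4" "t \<noteq> c v" "t \<noteq> c w" using exists_color_avoiding by blast
  define c' where "c' = c(b := t)"
  have c'_other: "c' z = c z" if "z \<noteq> b" for z using that by (simp add: c'_def)
  have c'b: "c' b = t" by (simp add: c'_def)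
  have "dynamic_4_coloring_on V E c' V"
    unfolding dynamic_4_coloring_on_def proper_coloring_def
  proof (intro conjI ballI impI)
    show "c' z < 4" if "z \<in> V" for z
      using that t dynamic_4_coloring_onD(1)[OF c] by (cases "z = b") (auto simp: c'_def)
    show "c' x \<noteq> c' y" if "x \<in> V" "y \<in> V" "E x y" for x y
    proof (cases "x = b \<or> y = b")
      case True
      then have "x = b \<and> y = v \<or> y = b \<and> x = v" using that(3) leaf sym by blast
      then show ?thesis using t vb c'_other c'b by auto
    next
      case False
      then show ?thesis using that dynamic_4_coloring_onD(2)[OF c, of x y] c'_other
        by (simp add: induced_def)
    qed
    show "happy V E c' x" if x: "x \<in> V" for x
    proof -
      consider "x = b" | "x = v" | "x \<noteq> b" "x \<noteq> v" by blast
      then show ?thesis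
      proof cases
        case 1
        then show ?thesis using leaf by (auto intro: happy_single_neighbor)
      next
        case 2
        then show ?thesis using w b t c'_other c'b leaf sym by (intro happyI[of w V b]) auto
      next
        case 3
        have nbrs: "neighbors V E x = neighbors (V - {b}) (induced (V - {b}) E) x"
          using 3 x leaf sym by (auto simp: neighbors_def induced_def)
        have "c' z = c z" if "z \<in> neighbors (V - {b}) (induced (V - {b}) E) x" for z
          using that c'_other by (simp add: neighbors_def)
        then show ?thesis using happy_cong[OF dynamic_4_coloring_onD(3)[OF c] nbrs] 3 x by blast
      qed
    qed
  qed
  then show ?thesis by (auto simp: dynamically_4_colorable_iff)
qed

section \<open>Separations\<close>

lemma separation_sym: "symp E \<Longrightarrow> separation V E A B \<Longrightarrow> separation V E B A"
  unfolding separation_def by (blast dest: sympD)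

lemma separation_subset: "separation V E A B \<Longrightarrow> A \<subseteq> V" "separation V E A B \<Longrightarrow> B \<subseteq> V"
  unfolding separation_def by blast+

lemma separation_interior_edge:
  "separation V E A B \<Longrightarrow> a \<in> A - B \<Longrightarrow> E a z \<Longrightarrow> z \<in> V \<Longrightarrow> z \<in> A"
  unfolding separation_def by blast

lemma separation_reach:
  assumes conn: "connected_on V E" and sep: "separation V E A B" and a: "a \<in> A"
  shows "\<exists>s\<in>A \<inter> B. (induced A E)\<^sup>*\<^sup>* a s"
proof -
  obtain b where b: "b \<in> B - A" using sep by (auto simp: separation_def)
  have "(induced V E)\<^sup>*\<^sup>* a b" using connected_on_path[OF conn] a b separation_subset[OF sep] by blast
  then have "(b \<in> A \<and> (induced A E)\<^sup>*\<^sup>* a b) \<or> (\<exists>s\<in>A \<inter> B. (induced A E)\<^sup>*\<^sup>* a s)"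
  proof (induction rule: rtranclp_induct)
    case base then show ?case using a by simp
  next
    case (step y z)
    then have yz: "z \<in> V" "E y z" by (auto simp: induced_def)
    from step.IH show ?case
    proof
      assume y: "y \<in> A \<and> (induced A E)\<^sup>*\<^sup>* a y"
      show ?case
      proof (cases "z \<in> A")
        case True
        then have "induced A E y z" using y yz by (simp add: induced_def)
        then show ?thesis using y True by (meson rtranclp.rtrancl_into_rtrancl)
      next
        case False
        then have "y \<in> B" using separation_interior_edge[OF sep _ yz(2,1)] y by blast
        then show ?thesis using y by blast
      qed
    qed blast
  qed
  then show ?thesis using b by blast
qed

lemma separation_Int_nonempty: "connected_on V E \<Longrightarrow> separation V E A B \<Longrightarrow> A \<inter> B \<noteq> {}"
  using separation_reach[of V E A B] by (auto simp: separation_def)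

lemma separation_Diff:
  assumes "symp E" "separation V E A B" "s \<in> A \<inter> B" "\<And>a. a \<in> A - B \<Longrightarrow> \<not> E s a"
  shows "separation V E (A - {s}) B"
  using assms unfolding separation_def by (blast dest: sympD)

lemma connected_on_separation_side:
  assumes conn: "connected_on V E" and sym: "symp E" and sep: "separation V E A B" and r: "r \<in> A"
    and reach: "\<And>s. s \<in> A \<inter> B \<Longrightarrow> (induced A E)\<^sup>*\<^sup>* r s"
  shows "connected_on A E"
proof (rule connected_onI[OF r _ sym])
  fix a assume "a \<in> A"
  then obtain s where "s \<in> A \<inter> B" "(induced A E)\<^sup>*\<^sup>* a s" using separation_reach[OF conn sep] by blast
  then show "(induced A E)\<^sup>*\<^sup>* r a" using reach induced_rtranclp_sym[OF sym] by (meson rtranclp_trans)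
qed

definition glue :: "'a set \<Rightarrow> ('a \<Rightarrow> nat) \<Rightarrow> ('a \<Rightarrow> nat) \<Rightarrow> 'a \<Rightarrow> nat" where
  "glue A c1 c2 z = (if z \<in> A then c1 z else c2 z)"

lemma glue_in: "z \<in> A \<Longrightarrow> glue A c1 c2 z = c1 z"
  by (simp add: glue_def)

lemma glue_out: "z \<notin> A \<Longrightarrow> glue A c1 c2 z = c2 z"
  by (simp add: glue_def)

lemma glue_in2: "z \<in> B \<Longrightarrow> (\<And>z. z \<in> A \<inter> B \<Longrightarrow> c1 z = c2 z) \<Longrightarrow> glue A c1 c2 z = c2 z"
  by (simp add: glue_def)

lemma dynamic_4_coloring_on_glue:
  assumes sg: "simple_graph V E" and sep: "separation V E A B"
    and c1: "dynamic_4_coloring_on A (induced A E) c1 (A - B)"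
    and c2: "dynamic_4_coloring_on B (induced B E) c2 (B - A)"
    and agree: "\<And>z. z \<in> A \<inter> B \<Longrightarrow> c1 z = c2 z"
    and happy_sep: "\<And>x. x \<in> A \<inter> B \<Longrightarrow> happy V E (glue A c1 c2) x"
  shows "dynamic_4_coloring_on V E (glue A c1 c2) V"
proof -
  have sepB: "separation V E B A" using separation_sym[OF simple_graph_symp[OF sg] sep] .
  have V: "V = A \<union> B" using sep by (simp add: separation_def)
  have cA: "glue A c1 c2 z = c1 z" if "z \<in> A" for z using that by (rule glue_in)
  have cB: "glue A c1 c2 z = c2 z" if "z \<in> B" for z using that agree by (rule glue_in2)
  have side: "x \<in> A \<and> y \<in> A \<or> x \<in> B \<and> y \<in> B" if xy: "E x y" for x y
  proof (cases "x \<in> A")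
    case True
    then show ?thesis using separation_interior_edge[OF sep _ xy] simple_graphD(2)[OF sg xy] V by blast
  next
    case False
    then have "x \<in> B - A" using simple_graphD(1)[OF sg xy] V by blast
    then show ?thesis using separation_interior_edge[OF sepB _ xy] simple_graphD(2)[OF sg xy] by blast
  qed
  have nbrs: "neighbors V E x = neighbors S (induced S E) x"
    if "separation V E S T" "x \<in> S - T" for S T x
    using separation_interior_edge[OF that] separation_subset(1)[OF that(1)] that(2)
    unfolding neighbors_def induced_def by blast
  show ?thesis unfolding dynamic_4_coloring_on_def proper_coloring_def
  proof (intro conjI ballI impI)
    show "glue A c1 c2 z < 4" if "z \<in> V" for z
      using that V cA cB dynamic_4_coloring_onD(1)[OF c1] dynamic_4_coloring_onD(1)[OF c2] by auto
    show "glue A c1 c2 x \<noteq> glue A c1 c2 y" if "x \<in> V" "y \<in> V" "E x y" for x y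
      using side[OF that(3)] cA cB that(3)
        dynamic_4_coloring_onD(2)[OF c1, of x y] dynamic_4_coloring_onD(2)[OF c2, of x y]
      by (auto simp: induced_def)
    show "happy V E (glue A c1 c2) x" if x: "x \<in> V" for x
    proof -
      consider "x \<in> A \<inter> B" | "x \<in> A - B" | "x \<in> B - A" using x V by blast
      then show ?thesis
      proof cases
        case 2
        then show ?thesis
          using happy_cong[OF dynamic_4_coloring_onD(3)[OF c1] nbrs[OF sep]] cA
          by (auto simp: neighbors_def)
      next
        case 3
        then show ?thesis
          using happy_cong[OF dynamic_4_coloring_onD(3)[OF c2] nbrs[OF sepB]] cB
          by (auto simp: neighbors_def)
      qed (rule happy_sep)
    qed
  qed
qed

definition delete_edge :: "('a \<Rightarrow> 'a \<Rightarrow> bool) \<Rightarrow> 'a \<Rightarrow> 'a \<Rightarrow> 'a \<Rightarrow> 'a \<Rightarrow> bool" where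
  "delete_edge E p q u v \<longleftrightarrow> E u v \<and> {u, v} \<noteq> {p, q}"

lemma simple_graph_delete_edge: "simple_graph V E \<Longrightarrow> simple_graph V (delete_edge E p q)"
  unfolding delete_edge_def by (intro simple_graphI) (auto dest: simple_graphD intro: simple_graph_finite
      simp: insert_commute)

lemma num_edges_delete_edge:
  assumes sg: "simple_graph V E" and pq: "E p q"
  shows "num_edges V (delete_edge E p q) < num_edges V E"
proof -
  have "edge_set V (delete_edge E p q) \<subseteq> edge_set V E"
    by (rule edge_set_mono) (auto simp: delete_edge_def)
  moreover have "{p, q} \<in> edge_set V E" using simple_graphD[OF sg pq] pq by (intro edge_in_edge_set)
  moreover have "{p, q} \<notin> edge_set V (delete_edge E p q)"
    unfolding edge_set_def delete_edge_def by (auto simp: doubleton_eq_iff)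
  ultimately have "edge_set V (delete_edge E p q) \<subset> edge_set V E" by blast
  then show ?thesis unfolding num_edges_def
    by (rule psubset_card_mono[OF finite_edge_set[OF simple_graph_finite[OF sg]]])
qed

section \<open>Identifying two vertices\<close>

definition merge :: "'a \<Rightarrow> 'a \<Rightarrow> 'a \<Rightarrow> 'a" where
  "merge x y z = (if z = y then x else z)"

definition identify_adj :: "'a \<Rightarrow> 'a \<Rightarrow> 'a set \<Rightarrow> ('a \<Rightarrow> 'a \<Rightarrow> bool) \<Rightarrow> 'a \<Rightarrow> 'a \<Rightarrow> bool" where
  "identify_adj x y A F u v \<longleftrightarrow> u \<in> A - {y} \<and> v \<in> A - {y} \<and> u \<noteq> v \<and>
     (F u v \<or> (u = x \<and> F y v) \<or> (v = x \<and> F u y))"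

context
  fixes A :: "'a set" and F x y
  assumes sg: "simple_graph A F" and xy: "x \<in> A" "y \<in> A" "x \<noteq> y" "\<not> F x y"
begin

lemma merge_in: "z \<in> A \<Longrightarrow> merge x y z \<in> A - {y}"
  using xy by (simp add: merge_def)

lemma identify_adj_merge: "F u v \<Longrightarrow> identify_adj x y A F (merge x y u) (merge x y v)"
  using xy simple_graphD[OF sg, of u v] simple_graphD(4)[OF sg, of v u]
  by (auto simp: identify_adj_def merge_def)

lemma simple_graph_identify: "simple_graph (A - {y}) (identify_adj x y A F)"
  using simple_graph_finite[OF sg] simple_graphD(4)[OF sg]
  by (intro simple_graphI) (auto simp: identify_adj_def)

lemma connected_graph_identify:
  assumes "connected_on A F"
  shows "connected_graph (A - {y}) (identify_adj x y A F)"
proof -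
  have "connected_on (\<Union>z\<in>A. {merge x y z}) (identify_adj x y A F)"
    using assms identify_adj_merge simple_graph_symp[OF simple_graph_identify]
    by (intro connected_on_UN[where VH=A and F=F]) (auto simp: connected_on_singleton)
  moreover have "(\<Union>z\<in>A. {merge x y z}) = A - {y}"
    using merge_in by (auto simp: merge_def)
  ultimately show ?thesis by (simp add: connected_graph_def)
qed

lemma num_edges_identify: "num_edges (A - {y}) (identify_adj x y A F) \<le> num_edges A F"
proof -
  have "edge_set (A - {y}) (identify_adj x y A F) \<subseteq> (\<lambda>e. merge x y ` e) ` edge_set A F"
  proof
    fix e assume "e \<in> edge_set (A - {y}) (identify_adj x y A F)"
    then obtain u v where e: "e = {u, v}" "identify_adj x y A F u v" unfolding edge_set_def by blast
    then have uv: "u \<in> A - {y}" "v \<in> A - {y}" "F u v \<or> (u = x \<and> F y v) \<or> (v = x \<and> F u y)"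
      by (auto simp: identify_adj_def)
    have merge_id: "merge x y z = z" if "z \<noteq> y" for z using that by (simp add: merge_def)
    from uv(3) show "e \<in> (\<lambda>e. merge x y ` e) ` edge_set A F"
    proof (elim disjE conjE)
      assume "F u v"
      then show ?thesis using e uv merge_id by (intro image_eqI[of _ _ "{u, v}"]) (auto simp: edge_set_def)
    next
      assume "u = x" "F y v"
      then show ?thesis using e uv merge_id xy
        by (intro image_eqI[of _ _ "{y, v}"]) (auto simp: edge_set_def merge_def)
    next
      assume "v = x" "F u y"
      then show ?thesis using e uv merge_id xy
        by (intro image_eqI[of _ _ "{u, y}"]) (auto simp: edge_set_def merge_def)
    qed
  qed
  moreover have fin: "finite (edge_set A F)" using finite_edge_set[OF simple_graph_finite[OF sg]] .
  ultimately have "card (edge_set (A - {y}) (identify_adj x y A F)) \<le> card ((\<lambda>e. merge x y ` e) ` edge_set A F)"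
    by (intro card_mono) auto
  also have "\<dots> \<le> card (edge_set A F)" by (rule card_image_le[OF fin])
  finally show ?thesis by (simp add: num_edges_def)
qed

lemma neighbors_identify:
  assumes "a \<in> A" "a \<noteq> x" "a \<noteq> y"
  shows "neighbors (A - {y}) (identify_adj x y A F) a = merge x y ` neighbors A F a"
proof
  show "merge x y ` neighbors A F a \<subseteq> neighbors (A - {y}) (identify_adj x y A F) a"
  proof
    fix z assume "z \<in> merge x y ` neighbors A F a"
    then obtain z' where "z' \<in> A" "F a z'" "z = merge x y z'" by (auto simp: neighbors_def)
    moreover have "merge x y a = a" using assms by (simp add: merge_def)
    ultimately show "z \<in> neighbors (A - {y}) (identify_adj x y A F) a"
      using identify_adj_merge[of a z'] merge_in by (auto simp: neighbors_def)
  qed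
  show "neighbors (A - {y}) (identify_adj x y A F) a \<subseteq> merge x y ` neighbors A F a"
  proof
    fix z assume "z \<in> neighbors (A - {y}) (identify_adj x y A F) a"
    then have z: "z \<in> A - {y}" "F a z \<or> (z = x \<and> F a y)"
      using assms by (auto simp: neighbors_def identify_adj_def)
    then show "z \<in> merge x y ` neighbors A F a"
      using xy by (auto simp: neighbors_def merge_def intro: image_eqI[of z _ y])
  qed
qed

text \<open>Pulling a coloring back along the identification keeps a vertex happy unless its
  neighborhood is exactly \<open>{x, y}\<close>, which the identification collapses to one vertex.\<close>

lemma dynamic_4_coloring_on_unidentify:
  assumes c: "dynamic_4_coloring_on (A - {y}) (identify_adj x y A F) c U"
  shows "dynamic_4_coloring_on A F (c \<circ> merge x y) {a \<in> U - {x, y}. neighbors A F a \<noteq> {x, y}}"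
  unfolding dynamic_4_coloring_on_def proper_coloring_def
proof (intro conjI ballI impI)
  show "(c \<circ> merge x y) v < 4" if "v \<in> A" for v
    using dynamic_4_coloring_onD(1)[OF c merge_in[OF that]] by simp
  show "(c \<circ> merge x y) u \<noteq> (c \<circ> merge x y) v" if "u \<in> A" "v \<in> A" "F u v" for u v
    using dynamic_4_coloring_onD(2)[OF c merge_in merge_in identify_adj_merge] that by simp
  show "happy A F (c \<circ> merge x y) a" if a: "a \<in> {a \<in> U - {x, y}. neighbors A F a \<noteq> {x, y}}" for a
  proof (cases "card (neighbors A F a) \<le> 1")
    case False
    let ?N = "neighbors A F a"
    have finN: "finite ?N" using simple_graph_finite[OF sg] by (simp add: neighbors_def)
    have "\<not> card ?N \<le> Suc 0" using False by simp
    then obtain u1 u2 where u: "u1 \<in> ?N" "u2 \<in> ?N" "u1 \<noteq> u2"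
      using card_le_Suc0_iff_eq[OF finN] by blast
    have aA: "a \<in> A" using u(1) simple_graphD(1)[OF sg] by (auto simp: neighbors_def)
    have nbrs: "neighbors (A - {y}) (identify_adj x y A F) a = merge x y ` ?N"
      using neighbors_identify[OF aA] a by blast
    have "\<not> card (merge x y ` ?N) \<le> 1"
    proof
      assume "card (merge x y ` ?N) \<le> 1"
      then have "card (merge x y ` ?N) \<le> Suc 0" by simp
      then have all_eq: "\<forall>a1\<in>merge x y ` ?N. \<forall>a2\<in>merge x y ` ?N. a1 = a2"
        by (simp only: card_le_Suc0_iff_eq[OF finite_imageI[OF finN]])
      have one: "merge x y s = merge x y t" if "s \<in> ?N" "t \<in> ?N" for s t
        using all_eq imageI[OF that(1), of "merge x y"] imageI[OF that(2), of "merge x y"] by blast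
      have "z \<in> {x, y}" if "z \<in> ?N" for z
        using one[OF that u(1)] one[OF that u(2)] u(3) by (auto simp: merge_def split: if_splits)
      moreover have "x \<in> ?N" "y \<in> ?N"
        using one[OF u(1) u(2)] u by (auto simp: merge_def split: if_splits)
      ultimately show False using a by blast
    qed
    moreover have "happy (A - {y}) (identify_adj x y A F) c a" using dynamic_4_coloring_onD(3)[OF c] a by blast
    ultimately have "\<exists>s\<in>merge x y ` ?N. \<exists>t\<in>merge x y ` ?N. c s \<noteq> c t"
      unfolding happy_def nbrs by blast
    then obtain s t where "s \<in> ?N" "t \<in> ?N" "c (merge x y s) \<noteq> c (merge x y t)" by blast
    then show ?thesis unfolding happy_def comp_def by blast
  qed (simp add: happy_def)
qed

end

section \<open>A minimal counterexample\<close>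

locale min_counterexample =
  fixes V :: "'a set" and E :: "'a \<Rightarrow> 'a \<Rightarrow> bool"
  assumes sg: "simple_graph V E" and cg: "connected_graph V E"
    and no_K5: "\<not> has_K5_minor V E" and not_C5: "\<not> iso_C5 V E"
    and not_colorable: "\<not> dynamically_4_colorable V E"
    and minimal: "\<And>(V' :: nat set) E'. simple_graph V' E' \<Longrightarrow> connected_graph V' E' \<Longrightarrow>
           \<not> has_K5_minor V' E' \<Longrightarrow> \<not> iso_C5 V' E' \<Longrightarrow>
           num_edges V' E' < num_edges V E \<Longrightarrow> dynamically_4_colorable V' E'"
begin

lemma finite_V: "finite V"
  using sg by (rule simple_graph_finite)

lemma symp_E: "symp E"
  using sg by (rule simple_graph_symp)

lemma connected_V: "connected_on V E"
  using cg by (simp add: connected_graph_def)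

lemma E_sym: "E u v \<Longrightarrow> E v u"
  using simple_graphD(4)[OF sg] .

lemma E_in: "E u v \<Longrightarrow> u \<in> V" "E u v \<Longrightarrow> v \<in> V"
  using simple_graphD(1,2)[OF sg] by blast+

lemma E_irrefl: "E u v \<Longrightarrow> u \<noteq> v"
  using simple_graphD(3)[OF sg] .

lemma colorable_if_fewer_edges:
  fixes H :: "'b set"
  assumes "simple_graph H F" "connected_graph H F" "\<not> has_K5_minor H F" "\<not> iso_C5 H F"
    "num_edges H F < num_edges V E"
  shows "dynamically_4_colorable H F"
proof -
  obtain h :: "'b \<Rightarrow> nat" where h: "inj_on h H"
    using ex_bij_betw_finite_nat[OF simple_graph_finite[OF assms(1)]] bij_betw_imp_inj_on by blast
  have "dynamically_4_colorable (h ` H) (map_adj h H F)"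
    using assms has_K5_minor_map[OF h] iso_C5_map[OF h]
    by (intro minimal simple_graph_map[OF h] connected_graph_map[OF h]) (auto simp: num_edges_map[OF h])
  then show ?thesis by (rule dynamically_4_colorable_map[OF h])
qed

text \<open>With a pendant edge at \<open>v\<close> the graph is still smaller than \<open>G\<close>, and every vertex but
  \<open>v\<close> keeps its neighborhood.\<close>

lemma almost_colorable_if_fewer_edges:
  fixes H :: "'b set"
  assumes "simple_graph H F" "connected_graph H F" "\<not> has_K5_minor H F"
    "num_edges H F + 1 < num_edges V E" "v \<in> H"
  shows "\<exists>c. dynamic_4_coloring_on H F c (H - {v})"
  using assms
  by (intro dynamic_4_coloring_on_pendant colorable_if_fewer_edges simple_graph_pendant
      connected_graph_pendant not_iso_C5_pendant)
    (auto simp: num_edges_pendant dest: has_K5_minor_pendant)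

lemma card_V_ge_5: "card V \<ge> 5"
  using dynamically_4_colorable_card_le_4[OF sg] not_colorable by linarith

lemma has_neighbor: "x \<in> V \<Longrightarrow> \<exists>w. E x w"
proof -
  assume x: "x \<in> V"
  have "V \<noteq> {x}" using card_V_ge_5 by auto
  then obtain y where "y \<in> V" "y \<noteq> x" using x by blast
  then show ?thesis using connected_on_has_neighbor[OF connected_V x] by blast
qed

lemma no_K5_induced: "S \<subseteq> V \<Longrightarrow> \<not> has_K5_minor S (induced S E)"
  using has_K5_minor_subgraph[of S "induced S E" V E] no_K5 symp_E by (auto simp: induced_def)

lemma num_edges_induced_add:
  assumes "S \<subseteq> V" "b \<notin> S" "\<And>p. p \<in> P \<Longrightarrow> E b p"
  shows "num_edges S (induced S E) + card P \<le> num_edges V E"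
  using assms by (intro num_edges_subgraph_add[OF sg]) (auto simp: induced_def)

lemma colorable_induced:
  assumes "S \<subseteq> V" "b \<in> V - S" "connected_on S E" "\<not> iso_C5 S (induced S E)"
  shows "dynamically_4_colorable S (induced S E)"
proof (rule colorable_if_fewer_edges)
  show "simple_graph S (induced S E)" using simple_graph_induced[OF sg assms(1)] .
  show "connected_graph S (induced S E)" using assms(3) by (simp add: connected_graph_def)
  show "\<not> has_K5_minor S (induced S E)" using no_K5_induced[OF assms(1)] .
  obtain p where "E b p" using has_neighbor assms(2) by blast
  then have "num_edges S (induced S E) + card {p} \<le> num_edges V E"
    by (intro num_edges_induced_add[OF assms(1)]) (use assms(2) in auto)
  then show "num_edges S (induced S E) < num_edges V E" by simp
qed (use assms in auto)

lemma two_neighbors: "b \<in> V \<Longrightarrow> \<exists>p q. p \<noteq> q \<and> E b p \<and> E b q"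
proof (rule ccontr)
  assume b: "b \<in> V" and "\<not> (\<exists>p q. p \<noteq> q \<and> E b p \<and> E b q)"
  moreover obtain v where bv: "E b v" using has_neighbor[OF b] by blast
  ultimately have leaf: "E b z \<longleftrightarrow> z = v" for z by blast
  let ?S = "V - {b}"
  have vS: "v \<in> ?S" using bv E_in E_irrefl by blast
  have "V \<noteq> {b}" using card_V_ge_5 by auto
  then have conn: "connected_on ?S E"
    using leaf by (intro connected_on_Diff_leaf[OF connected_V b _ _ symp_E]) auto
  have "\<not> iso_C5 ?S (induced ?S E)"
    using dynamically_4_colorable_C5_pendant[OF sg b leaf] not_colorable by blast
  then obtain c where c: "dynamic_4_coloring_on ?S (induced ?S E) c ?S"
    using colorable_induced[OF _ _ conn] b by (auto simp: dynamically_4_colorable_iff)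
  have "?S \<noteq> {v}"
  proof
    assume "?S = {v}"
    then have "card V \<le> card {b, v}" by (intro card_mono) auto
    moreover have "card {b, v} \<le> 2" by (simp add: card_insert_if)
    ultimately show False using card_V_ge_5 by simp
  qed
  then obtain y where "y \<in> ?S" "y \<noteq> v" using vS by blast
  then obtain w where "w \<in> ?S" "w \<noteq> v" "E v w"
    using connected_on_has_neighbor[OF conn vS] by blast
  then show False
    using dynamic_4_coloring_extend_leaf[OF sg b leaf c] not_colorable by blast
qed

lemma almost_colorable_induced:
  assumes "S \<subseteq> V" "b \<in> V - S" "connected_on S E" "v \<in> S"
  shows "\<exists>c. dynamic_4_coloring_on S (induced S E) c (S - {v})"
proof (rule almost_colorable_if_fewer_edges)
  show "simple_graph S (induced S E)" using simple_graph_induced[OF sg assms(1)] .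
  show "connected_graph S (induced S E)" using assms(3) by (simp add: connected_graph_def)
  show "\<not> has_K5_minor S (induced S E)" using no_K5_induced[OF assms(1)] .
  obtain p q where pq: "p \<noteq> q" "E b p" "E b q" using two_neighbors assms(2) by blast
  have "num_edges S (induced S E) + card {p, q} \<le> num_edges V E"
    by (rule num_edges_induced_add[OF assms(1)]) (use assms(2) pq in auto)
  then show "num_edges S (induced S E) + 1 < num_edges V E" using pq(1) by simp
qed (use assms in auto)

subsection \<open>Separations of order at most one\<close>

lemma glue_contradiction:
  assumes "separation V E A B"
    "dynamic_4_coloring_on A (induced A E) c1 (A - B)"
    "dynamic_4_coloring_on B (induced B E) c2 (B - A)"
    "\<And>z. z \<in> A \<inter> B \<Longrightarrow> c1 z = c2 z"
    "\<And>x. x \<in> A \<inter> B \<Longrightarrow> happy V E (glue A c1 c2) x"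
  shows False
  using dynamic_4_coloring_on_glue[OF sg assms] not_colorable by (auto simp: dynamically_4_colorable_iff)

lemma neighbor_color_nonzero:
  assumes "dynamic_4_coloring_on A (induced A E) d U" "s \<in> A" "t \<in> A" "E s t" "d s = 0"
  shows "d t \<in> {1, 2, 3}"
  using dynamic_4_coloring_onD(1,2)[OF assms(1)] assms(2-5) by (fastforce simp: induced_def)

lemma separation_order_ge_2:
  assumes sep: "separation V E A B"
  shows "2 \<le> card (A \<inter> B)"
proof (rule ccontr)
  assume "\<not> 2 \<le> card (A \<inter> B)"
  then have card: "card (A \<inter> B) \<le> 1" by simp
  have sepB: "separation V E B A" using separation_sym[OF symp_E sep] .
  have AB: "A \<subseteq> V" "B \<subseteq> V" using separation_subset[OF sep] by auto
  have fin: "finite (A \<inter> B)" using AB finite_V by (meson finite_Int finite_subset)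
  obtain v where "v \<in> A \<inter> B" using separation_Int_nonempty[OF connected_V sep] by blast
  moreover have "\<forall>x\<in>A \<inter> B. \<forall>y\<in>A \<inter> B. x = y" using card card_le_Suc0_iff_eq[OF fin] by simp
  ultimately have v: "A \<inter> B = {v}" by blast
  have nbr: "\<exists>a\<in>S - T. E v a" if ST: "separation V E S T" "S \<inter> T = {v}" for S T
  proof (rule ccontr)
    assume "\<not> (\<exists>a\<in>S - T. E v a)"
    then have "separation V E (S - {v}) T" using separation_Diff[OF symp_E ST(1)] ST(2) by blast
    moreover have "(S - {v}) \<inter> T = {}" using ST(2) by blast
    ultimately show False using separation_Int_nonempty[OF connected_V] by blast
  qed
  obtain a0 where a0: "a0 \<in> A - B" "E v a0" using nbr[OF sep v] by blast
  obtain b0 where b0: "b0 \<in> B - A" "E v b0" using nbr[OF sepB] v by blast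
  have side: "\<exists>c. dynamic_4_coloring_on S (induced S E) c (S - T) \<and> c v = 0"
    if ST: "separation V E S T" "S \<inter> T = {v}" for S T
  proof -
    have "connected_on S E"
      using ST by (intro connected_on_separation_side[OF connected_V symp_E ST(1), of v]) auto
    moreover obtain b where "b \<in> T - S" using ST(1) by (auto simp: separation_def)
    then have "b \<in> V - S" using separation_subset(2)[OF ST(1)] by blast
    ultimately obtain c where c: "dynamic_4_coloring_on S (induced S E) c (S - {v})"
      using almost_colorable_induced[OF separation_subset(1)[OF ST(1)]] ST(2) by blast
    obtain p where "color_perm p" "p (c v) = 0"
      using color_perm_to_0 dynamic_4_coloring_onD(1)[OF c] ST(2) by blast
    then show ?thesis using dynamic_4_coloring_on_perm[OF c] ST(2)
      by (intro exI[of _ "p \<circ> c"]) (auto intro: dynamic_4_coloring_on_subset)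
  qed
  obtain d1 where d1: "dynamic_4_coloring_on A (induced A E) d1 (A - B)" "d1 v = 0"
    using side[OF sep v] by blast
  obtain d2 where d2: "dynamic_4_coloring_on B (induced B E) d2 (B - A)" "d2 v = 0"
    using side[OF sepB] v by blast
  have "d1 a0 \<in> {1, 2, 3}" by (rule neighbor_color_nonzero[OF d1(1) _ _ a0(2) d1(2)]) (use v a0 in auto)
  moreover have "d2 b0 \<in> {1, 2, 3}" by (rule neighbor_color_nonzero[OF d2(1) _ _ b0(2) d2(2)]) (use v b0 in auto)
  ultimately obtain r where r: "color_perm r" "r 0 = 0" "r (d2 b0) \<noteq> d1 a0"
    using color_perm_avoid[of "d2 b0" "d2 b0" "d1 a0" "d1 a0"] by blast
  show False
  proof (rule glue_contradiction[OF sep d1(1) dynamic_4_coloring_on_perm[OF d2(1) r(1)]])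
    show "d1 z = (r \<circ> d2) z" if "z \<in> A \<inter> B" for z using that v d1 d2 r by simp
    show "happy V E (glue A d1 (r \<circ> d2)) x" if "x \<in> A \<inter> B" for x
      using that v a0 b0 r AB glue_in[of a0 A] glue_out[of b0 A]
      by (intro happyI[of a0 V b0]) auto
  qed
qed

lemma connected_Diff_vertex:
  assumes v: "v \<in> V"
  shows "connected_on (V - {v}) E"
proof -
  have "V \<noteq> {v}"
  proof
    assume "V = {v}"
    with card_V_ge_5 show False by simp
  qed
  then have "V - {v} \<noteq> {}" using v by blast
  then obtain u0 where u0: "u0 \<in> V - {v}" by blast
  let ?R = "component (V - {v}) E u0"
  have R: "?R \<subseteq> V - {v}" by (rule component_subset[OF u0])
  show ?thesis
  proof (cases "?R = V - {v}")
    case True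
    then show ?thesis using connected_on_component[OF u0 symp_E] by simp
  next
    case False
    have "separation V E (V - ?R) (?R \<union> {v})" unfolding separation_def
    proof (intro conjI ballI)
      show "V - ?R \<union> (?R \<union> {v}) = V" using R v by blast
      show "V - ?R - (?R \<union> {v}) \<noteq> {}" using False R by blast
      show "?R \<union> {v} - (V - ?R) \<noteq> {}" using component_self[of u0] R by blast
      show "\<not> E x y" if x: "x \<in> V - ?R - (?R \<union> {v})" and y: "y \<in> ?R \<union> {v} - (V - ?R)" for x y
      proof
        assume "E x y"
        moreover have "y \<in> ?R" "x \<in> V - {v}" using x y R v by auto
        ultimately have "x \<in> ?R" using component_closed[OF u0, where F=E and b=y and c=x] E_sym by blast
        then show False using x by blast
      qed
    qed
    moreover have "(V - ?R) \<inter> (?R \<union> {v}) = {v}" using v R by blast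
    ultimately show ?thesis by (auto dest!: separation_order_ge_2)
  qed
qed

subsection \<open>Separations of order two\<close>

lemma separation2_separator_neighbor:
  assumes sep: "separation V E A B" and xy: "A \<inter> B = {x, y}" and s: "s \<in> {x, y}"
  shows "\<exists>a\<in>A - B. E s a"
proof (rule ccontr)
  assume "\<not> (\<exists>a\<in>A - B. E s a)"
  then have "separation V E (A - {s}) B" using separation_Diff[OF symp_E sep] xy s by blast
  moreover have "card ((A - {s}) \<inter> B) \<le> 1"
  proof -
    have "(A - {s}) \<inter> B \<subseteq> {x, y} - {s}" using xy by blast
    moreover have "card ({x, y} - {s}) \<le> 1" using s by (auto simp: card_insert_if)
    ultimately show ?thesis by (meson card_mono finite.emptyI finite.insertI finite_Diff order_trans)
  qed
  ultimately show False by (auto dest!: separation_order_ge_2)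
qed

lemma separation2_side_connected:
  assumes sep: "separation V E A B" and xy: "A \<inter> B = {x, y}"
  shows "connected_on A E"
proof -
  have AV: "A \<subseteq> V" using separation_subset(1)[OF sep] .
  have xA: "x \<in> A" "y \<in> A" using xy by auto
  let ?R = "component A E x"
  have R: "?R \<subseteq> A" by (rule component_subset[OF xA(1)])
  have yR: "y \<in> ?R"
  proof (rule ccontr)
    assume yR: "y \<notin> ?R"
    obtain a where a: "a \<in> A - B" "E x a" using separation2_separator_neighbor[OF sep xy] by blast
    then have aR: "a \<in> ?R" using component_closed[OF xA(1) component_self] by blast
    have "separation V E ?R ((V - ?R) \<union> {x})" unfolding separation_def
    proof (intro conjI ballI)
      show "?R \<union> (V - ?R \<union> {x}) = V" using R AV xA by blast
      show "?R - (V - ?R \<union> {x}) \<noteq> {}" using aR a xy by blast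
      show "V - ?R \<union> {x} - ?R \<noteq> {}" using yR xA AV by blast
      show "\<not> E u w" if u: "u \<in> ?R - (V - ?R \<union> {x})" and w: "w \<in> V - ?R \<union> {x} - ?R" for u w
      proof
        assume uw: "E u w"
        have "u \<in> A - B" using u R yR xy by blast
        then have "w \<in> A" using separation_interior_edge[OF sep _ uw] w xA AV by blast
        then have "w \<in> ?R" using component_closed[OF xA(1)] u uw by blast
        then show False using w by blast
      qed
    qed
    moreover have "card (?R \<inter> (V - ?R \<union> {x})) \<le> 1"
      by (rule order_trans[OF card_mono[of "{x}"]]) auto
    ultimately show False by (auto dest!: separation_order_ge_2)
  qed
  show ?thesis
  proof (rule connected_on_separation_side[OF connected_V symp_E sep xA(1)])
    show "(induced A E)\<^sup>*\<^sup>* x s" if "s \<in> A \<inter> B" for s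
      using that xy yR by (auto simp: component_def)
  qed
qed

lemma separation2_side_almost_colorable:
  assumes sep: "separation V E A B" and xy: "A \<inter> B = {x, y}" and s: "s \<in> {x, y}"
  shows "\<exists>c. dynamic_4_coloring_on A (induced A E) c (A - {s})"
proof -
  obtain b where "b \<in> B - A" using sep by (auto simp: separation_def)
  then have "b \<in> V - A" using separation_subset(2)[OF sep] by blast
  moreover have "s \<in> A" using xy s by blast
  ultimately show ?thesis
    using almost_colorable_induced[OF separation_subset(1)[OF sep] _ separation2_side_connected[OF sep xy]] by blast
qed

lemma happy_from_side:
  assumes d: "dynamic_4_coloring_on S (induced S E) d U" and S: "S \<subseteq> V"
    and x: "x \<in> U" "x \<in> S" and a: "a \<in> S" "a' \<in> S" "a \<noteq> a'" "E x a" "E x a'"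
    and agree: "\<And>z. z \<in> S \<Longrightarrow> c z = d z"
  shows "happy V E c x"
proof -
  obtain s1 s2 where "s1 \<in> S" "s2 \<in> S" "E x s1" "E x s2" "d s1 \<noteq> d s2"
    using happy_induced_pair[OF d x(1,2) finite_subset[OF S finite_V] a] by blast
  then show ?thesis using S agree by (intro happyI[of s1 V s2]) auto
qed

lemma separation2_not_adjacent:
  assumes sep: "separation V E A B" and xy: "A \<inter> B = {x, y}" and "x \<noteq> y"
  shows "\<not> E x y"
proof
  assume exy: "E x y"
  have sepB: "separation V E B A" using separation_sym[OF symp_E sep] .
  have xyB: "B \<inter> A = {x, y}" using xy by blast
  have AB: "A \<subseteq> V" "B \<subseteq> V" using separation_subset[OF sep] by auto
  have xin: "x \<in> A" "y \<in> A" "x \<in> B" "y \<in> B" using xy by auto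
  have normalized: "\<exists>d. dynamic_4_coloring_on S (induced S E) d (S - {s}) \<and> d x = 0 \<and> d y = 1"
    if ST: "separation V E S T" "S \<inter> T = {x, y}" "s \<in> {x, y}" for S T s
  proof -
    obtain c where c: "dynamic_4_coloring_on S (induced S E) c (S - {s})"
      using separation2_side_almost_colorable[OF ST] by blast
    have "x \<in> S" "y \<in> S" using ST(2) by auto
    then have "c x \<noteq> c y" "c x < 4" "c y < 4"
      using dynamic_4_coloring_onD(1,2)[OF c] exy by (auto simp: induced_def)
    then obtain p where "color_perm p" "p (c x) = 0" "p (c y) = 1" using color_perm_to_01 by blast
    then show ?thesis using dynamic_4_coloring_on_perm[OF c] by (intro exI[of _ "p \<circ> c"]) simp
  qed
  obtain d1 where d1: "dynamic_4_coloring_on A (induced A E) d1 (A - {x})" "d1 x = 0" "d1 y = 1"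
    using normalized[OF sep xy] by blast
  obtain d2 where d2: "dynamic_4_coloring_on B (induced B E) d2 (B - {y})" "d2 x = 0" "d2 y = 1"
    using normalized[OF sepB xyB] by blast
  have agree: "d1 z = d2 z" if "z \<in> A \<inter> B" for z using that xy d1 d2 by auto
  show False
  proof (rule glue_contradiction[OF sep])
    show "dynamic_4_coloring_on A (induced A E) d1 (A - B)"
      by (rule dynamic_4_coloring_on_subset[OF d1(1)]) (use xin in blast)
    show "dynamic_4_coloring_on B (induced B E) d2 (B - A)"
      by (rule dynamic_4_coloring_on_subset[OF d2(1)]) (use xin in blast)
    show "happy V E (glue A d1 d2) s" if "s \<in> A \<inter> B" for s
    proof -
      have "s = x \<or> s = y" using that xy by blast
      then show ?thesis
      proof
        assume "s = x"
        obtain b where b: "b \<in> B - A" "E x b" using separation2_separator_neighbor[OF sepB xyB] by blast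
        have "happy V E (glue A d1 d2) x"
        proof (rule happy_from_side[OF d2(1) AB(2), where a=b and a'=y])
          show "glue A d1 d2 z = d2 z" if "z \<in> B" for z using glue_in2[OF that] agree by blast
        qed (use b xin exy \<open>x \<noteq> y\<close> in auto)
        then show ?thesis using \<open>s = x\<close> by simp
      next
        assume "s = y"
        obtain a where a: "a \<in> A - B" "E y a" using separation2_separator_neighbor[OF sep xy] by blast
        have "happy V E (glue A d1 d2) y"
        proof (rule happy_from_side[OF d1(1) AB(1), where a=a and a'=x])
          show "glue A d1 d2 z = d1 z" if "z \<in> A" for z using glue_in[OF that] .
        qed (use a xin E_sym[OF exy] \<open>x \<noteq> y\<close> in auto)
        then show ?thesis using \<open>s = y\<close> by simp
      qed
    qed
  qed (use agree in auto)
qed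

lemma two_thread_recolor:
  assumes a12: "a1 \<noteq> a2" and pq: "p \<noteq> q" and pa2: "p \<noteq> a2" and qa1: "q \<noteq> a1"
    and n1: "\<And>z. E a1 z \<longleftrightarrow> z = p \<or> z = a2"
    and n2: "\<And>z. E a2 z \<longleftrightarrow> z = a1 \<or> z = q"
    and u: "u1 \<noteq> u2" "u1 \<noteq> a1" "u2 \<noteq> a1" "E p u1" "E p u2"
    and c: "dynamic_4_coloring_on V (delete_edge E p a1) c V"
  shows "dynamically_4_colorable V E"
proof -
  let ?F = "delete_edge E p a1"
  have pa1: "p \<noteq> a1" and qa2: "q \<noteq> a2" using E_irrefl n1[of p] n2[of q] by blast+
  have inV: "p \<in> V" "a1 \<in> V" "a2 \<in> V" "q \<in> V" using E_in n1[of p] n2[of q] by blast+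
  have F_iff: "?F u v \<longleftrightarrow> E u v" if "u \<noteq> a1" "v \<noteq> a1" for u v
    using that by (auto simp: delete_edge_def doubleton_eq_iff)
  obtain r where r: "E q r" "r \<noteq> a2"
    using two_neighbors[OF E_in(2)[of a2 q]] n2 by blast
  have ra1: "r \<noteq> a1" using r n1[of q] pq qa2 E_sym by blast
  \<comment> \<open>\<open>c p \<noteq> t2\<close>, \<open>t1 \<noteq> c q\<close> and \<open>c r \<noteq> t2\<close> keep \<open>a1\<close>, \<open>a2\<close> and \<open>q\<close> happy.\<close>
  obtain t2 where t2: "t2 < 4" "t2 \<noteq> c p" "t2 \<noteq> c q" "t2 \<noteq> c r" using exists_color_avoiding by blast
  obtain t1 where t1: "t1 < 4" "t1 \<noteq> c p" "t1 \<noteq> t2" "t1 \<noteq> c q" using exists_color_avoiding by blast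
  define c' where "c' = c(a1 := t1, a2 := t2)"
  have c'a: "c' a1 = t1" "c' a2 = t2" using a12 by (auto simp: c'_def)
  have c'_other: "c' z = c z" if "z \<noteq> a1" "z \<noteq> a2" for z using that by (simp add: c'_def)
  have "dynamic_4_coloring_on V E c' V"
    unfolding dynamic_4_coloring_on_def proper_coloring_def
  proof (intro conjI ballI impI)
    show "c' z < 4" if "z \<in> V" for z
      using that t1 t2 dynamic_4_coloring_onD(1)[OF c] by (auto simp: c'_def)
    show "c' u \<noteq> c' v" if "u \<in> V" "v \<in> V" "E u v" for u v
    proof -
      have thread: "c' u \<noteq> c' v" if "E u v" "u \<in> {a1, a2}" for u v
        using that n1[of v] n2[of v] c'a c'_other[of p] c'_other[of q] pa1 pa2 qa1 qa2 t1 t2 by auto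
      show ?thesis
      proof (cases "u \<in> {a1, a2} \<or> v \<in> {a1, a2}")
        case True
        then show ?thesis using thread[OF \<open>E u v\<close>] thread[OF E_sym[OF \<open>E u v\<close>]] by metis
      next
        case False
        then have "?F u v" using \<open>E u v\<close> F_iff by blast
        then have "c u \<noteq> c v" using dynamic_4_coloring_onD(2)[OF c \<open>u \<in> V\<close> \<open>v \<in> V\<close>] by blast
        then show ?thesis using False c'_other by simp
      qed
    qed
    show "happy V E c' u" if uV: "u \<in> V" for u
    proof -
      consider "u = a1" | "u = a2" | "u = q" | "u = p" | "u \<notin> {a1, a2, p, q}" by blast
      then show ?thesis
      proof cases
        case 1
        then show ?thesis using n1 inV c'a c'_other[OF pa1 pa2] t2 by (intro happyI[of p V a2]) auto
      next
        case 2
        then show ?thesis using n2 inV c'a c'_other[OF qa1 qa2] t1 by (intro happyI[of a1 V q]) auto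
      next
        case 3
        then show ?thesis using r n2 inV E_in(2)[OF r(1)] E_sym c'a c'_other[OF ra1 r(2)] t2
          by (intro happyI[of r V a2]) auto
      next
        case 4
        have "?F p u1" "?F p u2" using u F_iff pa1 by auto
        then obtain s1 s2 where s: "s1 \<in> V" "s2 \<in> V" "?F p s1" "?F p s2" "c s1 \<noteq> c s2"
          using happyD[OF dynamic_4_coloring_onD(3)[OF c inV(1)] finite_V
              E_in(2)[OF u(4)] E_in(2)[OF u(5)] u(1)] by blast
        have "s1 \<noteq> a1" "s2 \<noteq> a1" "s1 \<noteq> a2" "s2 \<noteq> a2"
          using s(3,4) n2[of p] E_sym pa1 pq by (auto simp: delete_edge_def)
        then show ?thesis using s 4 c'_other by (intro happyI[of s1 V s2]) (auto simp: delete_edge_def)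
      next
        case 5
        then have nbrs: "neighbors V ?F u = neighbors V E u" and "\<And>z. E u z \<Longrightarrow> z \<noteq> a1 \<and> z \<noteq> a2"
          using n1[of u] n2[of u] E_sym by (auto simp: neighbors_def delete_edge_def doubleton_eq_iff)
        then have "z \<in> neighbors V ?F u \<Longrightarrow> c' z = c z" for z
          using c'_other by (simp add: neighbors_def delete_edge_def)
        then show ?thesis using happy_cong[OF dynamic_4_coloring_onD(3)[OF c uV] nbrs[symmetric]] by blast
      qed
    qed
  qed
  then show ?thesis by (auto simp: dynamically_4_colorable_iff)
qed

text \<open>A path \<open>p a1 a2 q\<close> whose inner vertices have degree two: delete the edge \<open>p a1\<close>, color the
  smaller graph, and recolor \<open>a1\<close> and \<open>a2\<close>.\<close>

lemma no_two_thread: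
  assumes a12: "a1 \<noteq> a2" and pq: "p \<noteq> q"
    and n1: "\<And>z. E a1 z \<longleftrightarrow> z = p \<or> z = a2"
    and n2: "\<And>z. E a2 z \<longleftrightarrow> z = a1 \<or> z = q"
    and u: "u1 \<noteq> u2" "u1 \<noteq> a1" "u2 \<noteq> a1" "E p u1" "E p u2"
  shows False
proof -
  have a1V: "a1 \<in> V" and a2V: "a2 \<in> V" using E_in n1[of a2] n2[of a1] by blast+
  have pa2: "p \<noteq> a2" using two_neighbors[OF a1V] n1 by force
  have qa1: "q \<noteq> a1" using two_neighbors[OF a2V] n2 by force
  let ?F = "delete_edge E p a1"
  have F_iff: "?F u v \<longleftrightarrow> E u v" if "u \<noteq> a1" "v \<noteq> a1" for u v
    using that by (auto simp: delete_edge_def doubleton_eq_iff)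
  have sgF: "simple_graph V ?F" by (rule simple_graph_delete_edge[OF sg])
  have "connected_on (V - {a1}) ?F"
    by (rule connected_on_mono[OF connected_Diff_vertex[OF a1V]]) (use F_iff in auto)
  moreover have "?F a2 a1" using n2 pa2 F_iff by (auto simp: delete_edge_def doubleton_eq_iff)
  ultimately have "connected_on ((V - {a1}) \<union> {a1}) ?F"
    using a2V a12 simple_graph_symp[OF sgF]
    by (intro connected_on_Un_edge[OF _ connected_on_singleton, where s=a2]) auto
  then have connF: "connected_graph V ?F" using a1V by (simp add: connected_graph_def insert_absorb)
  have "\<not> has_K5_minor V ?F"
    using has_K5_minor_subgraph[of V ?F V E] no_K5 symp_E by (auto simp: delete_edge_def)
  moreover have "\<not> iso_C5 V ?F"
  proof
    assume "iso_C5 V ?F"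
    then obtain s t where "s \<noteq> t" "?F a1 s" "?F a1 t"
      using iso_C5_neighbors[OF sgF _ a1V] by blast
    then show False using n1 by (auto simp: delete_edge_def)
  qed
  moreover have "num_edges V ?F < num_edges V E"
    using num_edges_delete_edge[OF sg] n1 E_sym by blast
  ultimately have "dynamically_4_colorable V ?F" using colorable_if_fewer_edges[OF sgF connF] by blast
  then obtain c where "dynamic_4_coloring_on V ?F c V" by (auto simp: dynamically_4_colorable_iff)
  then show False using two_thread_recolor[OF a12 pq pa2 qa1 n1 n2 u] not_colorable by blast
qed

lemma separation2_C5_thread:
  assumes sep: "separation V E A B" and xy: "A \<inter> B = {x, y}" and "x \<noteq> y"
    and w: "w \<in> B - A" and wn: "\<And>z. E w z \<longleftrightarrow> z = x \<or> z = y"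
    and c5: "iso_C5 (insert w A) (induced (insert w A) E)"
  shows "\<exists>a1 a2 p q. a1 \<in> A - B \<and> a2 \<in> A - B \<and> a1 \<noteq> a2 \<and> {p, q} = {x, y} \<and>
    (\<forall>z. E a1 z \<longleftrightarrow> z = p \<or> z = a2) \<and> (\<forall>z. E a2 z \<longleftrightarrow> z = a1 \<or> z = q)"
proof -
  let ?A' = "insert w A"
  let ?T = "induced ?A' E"
  have AV: "A \<subseteq> V" using separation_subset(1)[OF sep] .
  have wA: "w \<notin> A" "w \<in> V" using w separation_subset(2)[OF sep] by auto
  have finA: "finite A" using finite_subset[OF AV finite_V] .
  have "card A + 1 = 5" using iso_C5_card[OF c5] wA finA by simp
  moreover have "card A = card (A - B) + 2"
  proof -
    have "card ((A - B) \<union> {x, y}) = card (A - B) + card {x, y}"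
      by (rule card_Un_disjoint) (use finA xy in auto)
    moreover have "A = (A - B) \<union> {x, y}" using xy by blast
    ultimately show ?thesis using \<open>x \<noteq> y\<close> by simp
  qed
  ultimately have "card (A - B) = 2" by simp
  then obtain a1 a2 where a12: "A - B = {a1, a2}" "a1 \<noteq> a2" by (meson card_2_iff)
  have A': "?A' = {a1, a2, x, y, w}" using a12 xy by blast
  have a: "a1 \<notin> {x, y, w}" "a2 \<notin> {x, y, w}" using a12 wA xy by auto
  have Tw: "?T w z \<longleftrightarrow> z = x \<or> z = y" for z using wn xy by (auto simp: induced_def)
  have interior: "?T a z \<longleftrightarrow> E a z" if "a \<in> A - B" for a z
    using that separation_interior_edge[OF sep that, of z] E_in(2)[of a z] by (auto simp: induced_def)
  obtain p q where "{p, q} = {x, y}" "\<forall>z. ?T a1 z \<longleftrightarrow> z = p \<or> z = a2" "\<forall>z. ?T a2 z \<longleftrightarrow> z = a1 \<or> z = q"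
    using iso_C5_degree2_path[OF simple_graph_induced[OF sg] c5 A' a12(2) a Tw] AV wA by blast
  then show ?thesis using interior a12 by (intro exI[of _ a1] exI[of _ a2] exI[of _ p] exI[of _ q]) auto
qed

lemma separation2_second_interior_vertex:
  assumes sep: "separation V E A B" and xy: "A \<inter> B = {x, y}"
    and cB: "card (B - A) \<ge> 2" and w: "w \<in> B - A" and wn: "\<And>z. E w z \<longleftrightarrow> z = x \<or> z = y"
  shows "\<exists>t\<in>B - A - {w}. \<exists>u\<in>{x, y}. E u t"
proof -
  have AB: "A \<subseteq> V" "B \<subseteq> V" using separation_subset[OF sep] by auto
  have ne: "B - A - {w} \<noteq> {}"
  proof
    assume "B - A - {w} = {}"
    then have "card (B - A) \<le> card {w}" by (intro card_mono) auto
    then show False using cB by simp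
  qed
  have "x \<in> V - (B - A - {w})" using xy AB by blast
  then have "V - (B - A - {w}) \<noteq> {}" by blast
  moreover have "B - A - {w} \<subseteq> V" using AB by blast
  ultimately obtain t u where t: "t \<in> B - A - {w}" and u: "u \<in> V - (B - A - {w})" and tu: "E t u"
    using connected_on_edge_leaving[OF connected_V _ ne] by blast
  have "u \<in> B"
  proof (rule ccontr)
    assume "u \<notin> B"
    then have "u \<in> A - B" using u sep by (auto simp: separation_def)
    then have "t \<in> A" using separation_interior_edge[OF sep _ E_sym[OF tu]] t AB by blast
    then show False using t by blast
  qed
  moreover have "u \<noteq> w"
  proof
    assume "u = w"
    then have "t \<in> {x, y}" using wn[of t] E_sym[OF tu] by blast
    then show False using t xy by blast
  qed
  ultimately have "u \<in> {x, y}" using u xy by blast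
  then show ?thesis using t E_sym[OF tu] by blast
qed

lemma separation2_side_not_C5:
  assumes sep: "separation V E A B" and xy: "A \<inter> B = {x, y}" and xny: "x \<noteq> y"
    and cB: "card (B - A) \<ge> 2" and w: "w \<in> B - A" and wn: "\<And>z. E w z \<longleftrightarrow> z = x \<or> z = y"
  shows "\<not> iso_C5 (insert w A) (induced (insert w A) E)"
proof
  assume c5: "iso_C5 (insert w A) (induced (insert w A) E)"
  obtain a1 a2 p q where a: "a1 \<in> A - B" "a2 \<in> A - B" "a1 \<noteq> a2" and pq: "{p, q} = {x, y}"
    and n1': "\<forall>z. E a1 z \<longleftrightarrow> z = p \<or> z = a2" and n2': "\<forall>z. E a2 z \<longleftrightarrow> z = a1 \<or> z = q"
    using separation2_C5_thread[OF sep xy xny w wn c5] by (elim exE conjE)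
  have n1: "E a1 z \<longleftrightarrow> z = p \<or> z = a2" and n2: "E a2 z \<longleftrightarrow> z = a1 \<or> z = q" for z
    using n1' n2' by blast+
  have "p \<noteq> q" using pq xny by auto
  obtain t u where t: "t \<in> B - A - {w}" and u: "u \<in> {p, q}" and ut: "E u t"
    using separation2_second_interior_vertex[OF sep xy cB w wn] pq by blast
  have distinct: "E u w" "w \<noteq> t" "w \<noteq> a1" "w \<noteq> a2" "t \<noteq> a1" "t \<noteq> a2"
    using u pq wn E_sym t w a by auto
  have "u = p \<or> u = q" using u by blast
  then show False
  proof
    assume "u = p"
    then show False using no_two_thread[OF a(3) \<open>p \<noteq> q\<close> n1 n2 distinct(2,3,5)] ut distinct(1) by blast
  next
    assume "u = q"
    have "E a2 z \<longleftrightarrow> z = q \<or> z = a1" "E a1 z \<longleftrightarrow> z = a2 \<or> z = p" for z using n1 n2 by blast+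
    then show False using no_two_thread[OF a(3)[symmetric] \<open>p \<noteq> q\<close>[symmetric], of w t] \<open>u = q\<close>
      ut distinct by blast
  qed
qed

lemma separation2_insert_colorable:
  assumes sep: "separation V E A B" and xy: "A \<inter> B = {x, y}" and xny: "x \<noteq> y"
    and cB: "card (B - A) \<ge> 2" and w: "w \<in> B - A" and wn: "\<And>z. E w z \<longleftrightarrow> z = x \<or> z = y"
  shows "dynamically_4_colorable (insert w A) (induced (insert w A) E)"
proof -
  obtain t where "t \<in> B - A - {w}" using separation2_second_interior_vertex[OF sep xy cB w wn] by blast
  then have "t \<in> V - insert w A" using separation_subset(2)[OF sep] by blast
  moreover have "connected_on (A \<union> {w}) E" using xy wn E_sym
    by (intro connected_on_Un_edge[OF separation2_side_connected[OF sep xy] connected_on_singleton _ _ _ symp_E]) auto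
  moreover have "insert w A \<subseteq> V" using w separation_subset[OF sep] by blast
  ultimately show ?thesis using colorable_induced separation2_side_not_C5[OF assms] by simp
qed

lemma separation2_no_degree2_vertex:
  assumes sep: "separation V E A B" and xy: "A \<inter> B = {x, y}" and xny: "x \<noteq> y"
    and cB: "card (B - A) \<ge> 2" and w: "w \<in> B - A"
  shows "\<not> (\<forall>z. E w z \<longleftrightarrow> z = x \<or> z = y)"
proof
  assume "\<forall>z. E w z \<longleftrightarrow> z = x \<or> z = y"
  then have wn: "E w z \<longleftrightarrow> z = x \<or> z = y" for z by blast
  let ?A' = "insert w A"
  have sepB: "separation V E B A" using separation_sym[OF symp_E sep] .
  have xyB: "B \<inter> A = {x, y}" using xy by blast
  have AB: "A \<subseteq> V" "B \<subseteq> V" using separation_subset[OF sep] by auto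
  have xin: "x \<in> A" "y \<in> A" "x \<in> B" "y \<in> B" using xy by auto
  have wA: "w \<notin> A" "w \<in> V" "w \<in> B" using w AB by auto
  have xw: "E x w" "E y w" "E w x" "E w y" using wn E_sym by blast+
  obtain c1 where c1: "dynamic_4_coloring_on ?A' (induced ?A' E) c1 ?A'"
    using separation2_insert_colorable[OF sep xy xny cB w wn] by (auto simp: dynamically_4_colorable_iff)
  obtain c2 where c2: "dynamic_4_coloring_on B (induced B E) c2 (B - {x})"
    using separation2_side_almost_colorable[OF sepB xyB] by blast
  have distinct: "c x \<noteq> c y" "c x \<noteq> c w" "c y \<noteq> c w"
    if h: "dynamic_4_coloring_on S (induced S E) c U" "S \<subseteq> V" "w \<in> U" "x \<in> S" "y \<in> S" "w \<in> S"
    for S U c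
  proof -
    obtain s1 s2 where "s1 \<in> S" "s2 \<in> S" "E w s1" "E w s2" "c s1 \<noteq> c s2"
      using happy_induced_pair[OF h(1,3,6) finite_subset[OF h(2) finite_V] h(4,5) xny xw(3,4)] by blast
    then show "c x \<noteq> c y" using wn by auto
    show "c x \<noteq> c w" "c y \<noteq> c w" using dynamic_4_coloring_onD(2)[OF h(1)] h(4-6) xw
      by (auto simp: induced_def)
  qed
  obtain d1 where d1: "dynamic_4_coloring_on ?A' (induced ?A' E) d1 ?A'" "d1 x = 0" "d1 y = 1" "d1 w = 2"
    using color_perm_normalize_012[OF c1 _ _ _ distinct[OF c1]] AB wA xin by auto
  obtain d2 where d2: "dynamic_4_coloring_on B (induced B E) d2 (B - {x})" "d2 x = 0" "d2 y = 1" "d2 w = 2"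
    using color_perm_normalize_012[OF c2 _ _ _ distinct[OF c2]] AB wA xin xny by auto
  show False
  proof (rule glue_contradiction[OF sep])
    show "dynamic_4_coloring_on A (induced A E) d1 (A - B)"
      using separation_interior_edge[OF sep] wA
      by (intro dynamic_4_coloring_on_induced_subset[OF d1(1)]) (auto dest: E_in)
    show "dynamic_4_coloring_on B (induced B E) d2 (B - A)"
      by (rule dynamic_4_coloring_on_subset[OF d2(1)]) (use xin in blast)
    show "d1 z = d2 z" if "z \<in> A \<inter> B" for z using that xy d1 d2 by auto
    show "happy V E (glue A d1 d2) s" if "s \<in> A \<inter> B" for s
    proof -
      have s: "s \<in> {x, y}" "s \<in> ?A'" using that xy by auto
      obtain a where a: "a \<in> A - B" "E s a" using separation2_separator_neighbor[OF sep xy s(1)] by blast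
      have "E s w" using s xw by auto
      then obtain s1 s2 where "s1 \<in> ?A'" "s2 \<in> ?A'" "E s s1" "E s s2" "d1 s1 \<noteq> d1 s2"
        using happy_induced_pair[OF d1(1) s(2) s(2) finite_subset[OF _ finite_V], of a w] AB wA a by blast
      then obtain r where r: "r \<in> ?A'" "E s r" "d1 r \<noteq> 2" by metis
      then have "r \<in> A" using d1(4) by auto
      then have "glue A d1 d2 r \<noteq> glue A d1 d2 w" using r(3) wA d2(4) by (simp add: glue_in glue_out)
      then show ?thesis using \<open>r \<in> A\<close> r(2) \<open>E s w\<close> AB wA by (intro happyI[of r V w]) auto
    qed
  qed
qed

text \<open>Identifying \<open>x\<close> with \<open>y\<close> in one side yields a minor of \<open>G\<close>: the connected other side
  serves as the branch set of the merged vertex.\<close>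

lemma separation2_identify_no_K5:
  assumes sep: "separation V E A B" and xy: "A \<inter> B = {x, y}"
  shows "\<not> has_K5_minor (A - {y}) (identify_adj x y A (induced A E))"
proof
  define \<phi> where "\<phi> z = (if z = x then B else {z})" for z
  have AB: "A \<subseteq> V" "B \<subseteq> V" using separation_subset[OF sep] by auto
  have xin: "x \<in> A" "y \<in> A" "x \<in> B" "y \<in> B" using xy by auto
  assume "has_K5_minor (A - {y}) (identify_adj x y A (induced A E))"
  then have "has_K5_minor V E"
  proof (rule has_K5_minor_branch_map[where \<phi>=\<phi>])
    have "connected_on B E"
      using separation2_side_connected[OF separation_sym[OF symp_E sep]] xy by (metis Int_commute)
    then show "\<phi> u \<subseteq> V \<and> connected_on (\<phi> u) E" if "u \<in> A - {y}" for u
      using that AB by (auto simp: \<phi>_def connected_on_singleton)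
    show "\<phi> u \<inter> \<phi> v = {}" if "u \<in> A - {y}" "v \<in> A - {y}" "u \<noteq> v" for u v
      using that xy by (auto simp: \<phi>_def)
    show "\<exists>p\<in>\<phi> u. \<exists>q\<in>\<phi> v. E p q"
      if "u \<in> A - {y}" "v \<in> A - {y}" "identify_adj x y A (induced A E) u v" for u v
      using that xin by (auto simp: \<phi>_def identify_adj_def induced_def)
  qed (rule symp_E)
  then show False using no_K5 by simp
qed

lemma separation2_identified_coloring:
  assumes sep: "separation V E A B" and xy: "A \<inter> B = {x, y}" and xny: "x \<noteq> y" and nxy: "\<not> E x y"
    and no_deg2: "\<And>u. u \<in> A - B \<Longrightarrow> \<not> (\<forall>z. E u z \<longleftrightarrow> z = x \<or> z = y)"
  shows "\<exists>d. dynamic_4_coloring_on A (induced A E) d (A - B) \<and> d x = 0 \<and> d y = 0"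
proof -
  let ?F = "induced A E"
  let ?M = "identify_adj x y A ?F"
  have AB: "A \<subseteq> V" "B \<subseteq> V" using separation_subset[OF sep] by auto
  have xin: "x \<in> A" "y \<in> A" "x \<in> B" "y \<in> B" using xy by auto
  have sgA: "simple_graph A ?F" using simple_graph_induced[OF sg AB(1)] .
  have nxyF: "\<not> ?F x y" using nxy by (simp add: induced_def)
  note identify = simple_graph_identify[OF sgA xin(1,2) xny nxyF]
    connected_graph_identify[OF sgA xin(1,2) xny nxyF]
    num_edges_identify[OF sgA xin(1,2) xny nxyF]
    dynamic_4_coloring_on_unidentify[OF sgA xin(1,2) xny nxyF]
  have "\<not> has_K5_minor (A - {y}) ?M" using separation2_identify_no_K5[OF sep xy] .
  moreover have "num_edges (A - {y}) ?M + 1 < num_edges V E"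
  proof -
    obtain b where b: "b \<in> B - A" using sep by (auto simp: separation_def)
    then obtain p q where pq: "p \<noteq> q" "E b p" "E b q" using two_neighbors AB by blast
    have "num_edges A ?F + card {p, q} \<le> num_edges V E"
      by (rule num_edges_induced_add[OF AB(1)]) (use b pq in auto)
    then show ?thesis using identify(3) pq(1) by simp
  qed
  moreover have "connected_on A ?F" using separation2_side_connected[OF sep xy] by simp
  moreover have "x \<in> A - {y}" using xin xny by blast
  ultimately obtain c where c: "dynamic_4_coloring_on (A - {y}) ?M c (A - {y} - {x})"
    using almost_colorable_if_fewer_edges[OF identify(1,2)] by blast
  obtain p where p: "color_perm p" "p (c x) = 0"
    using color_perm_to_0 dynamic_4_coloring_onD(1)[OF c] \<open>x \<in> A - {y}\<close> by blast
  have "dynamic_4_coloring_on A ?F ((p \<circ> c) \<circ> merge x y) (A - B)"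
  proof (rule dynamic_4_coloring_on_subset[OF identify(4)[OF dynamic_4_coloring_on_perm[OF c p(1)]]])
    show "A - B \<subseteq> {a \<in> A - {y} - {x} - {x, y}. neighbors A ?F a \<noteq> {x, y}}"
    proof
      fix a assume a: "a \<in> A - B"
      have "neighbors A ?F a \<noteq> {x, y}"
      proof
        assume "neighbors A ?F a = {x, y}"
        then have "E a z \<longleftrightarrow> z = x \<or> z = y" for z
          using a separation_interior_edge[OF sep a, of z] E_in(2)[of a z]
          by (auto simp: neighbors_def induced_def)
        then show False using no_deg2[OF a] by blast
      qed
      then show "a \<in> {a \<in> A - {y} - {x} - {x, y}. neighbors A ?F a \<noteq> {x, y}}" using a xy by blast
    qed
  qed
  moreover have "((p \<circ> c) \<circ> merge x y) x = 0" "((p \<circ> c) \<circ> merge x y) y = 0"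
    using p(2) xny by (simp_all add: merge_def)
  ultimately show ?thesis by blast
qed

lemma separation2_degree2_vertex_exists:
  assumes sep: "separation V E A B" and xy: "A \<inter> B = {x, y}" and xny: "x \<noteq> y" and nxy: "\<not> E x y"
  shows "\<exists>u\<in>(A - B) \<union> (B - A). \<forall>z. E u z \<longleftrightarrow> z = x \<or> z = y"
proof (rule ccontr)
  assume "\<not> ?thesis"
  then have no_deg2: "\<And>u. u \<in> (A - B) \<union> (B - A) \<Longrightarrow> \<not> (\<forall>z. E u z \<longleftrightarrow> z = x \<or> z = y)" by blast
  have sepB: "separation V E B A" using separation_sym[OF symp_E sep] .
  have xyB: "B \<inter> A = {x, y}" using xy by blast
  have AB: "A \<subseteq> V" "B \<subseteq> V" using separation_subset[OF sep] by auto
  have xin: "x \<in> A" "y \<in> A" "x \<in> B" "y \<in> B" using xy by auto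
  obtain d1 where d1: "dynamic_4_coloring_on A (induced A E) d1 (A - B)" "d1 x = 0" "d1 y = 0"
    using separation2_identified_coloring[OF sep xy xny nxy] no_deg2 by blast
  obtain d2 where d2: "dynamic_4_coloring_on B (induced B E) d2 (B - A)" "d2 x = 0" "d2 y = 0"
    using separation2_identified_coloring[OF sepB xyB xny nxy] no_deg2 by blast
  obtain a0 where a0: "a0 \<in> A - B" "E x a0" using separation2_separator_neighbor[OF sep xy] by blast
  obtain a1 where a1: "a1 \<in> A - B" "E y a1" using separation2_separator_neighbor[OF sep xy] by blast
  obtain b0 where b0: "b0 \<in> B - A" "E x b0" using separation2_separator_neighbor[OF sepB xyB] by blast
  obtain b1 where b1: "b1 \<in> B - A" "E y b1" using separation2_separator_neighbor[OF sepB xyB] by blast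
  have "d1 a0 \<in> {1, 2, 3}" by (rule neighbor_color_nonzero[OF d1(1) _ _ a0(2) d1(2)]) (use xin a0 in auto)
  moreover have "d1 a1 \<in> {1, 2, 3}" by (rule neighbor_color_nonzero[OF d1(1) _ _ a1(2) d1(3)]) (use xin a1 in auto)
  moreover have "d2 b0 \<in> {1, 2, 3}" by (rule neighbor_color_nonzero[OF d2(1) _ _ b0(2) d2(2)]) (use xin b0 in auto)
  moreover have "d2 b1 \<in> {1, 2, 3}" by (rule neighbor_color_nonzero[OF d2(1) _ _ b1(2) d2(3)]) (use xin b1 in auto)
  ultimately obtain r where r: "color_perm r" "r 0 = 0" "r (d2 b0) \<noteq> d1 a0" "r (d2 b1) \<noteq> d1 a1"
    using color_perm_avoid[of "d2 b0" "d2 b1" "d1 a0" "d1 a1"] by blast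
  show False
  proof (rule glue_contradiction[OF sep d1(1) dynamic_4_coloring_on_perm[OF d2(1) r(1)]])
    show "d1 z = (r \<circ> d2) z" if "z \<in> A \<inter> B" for z using that xy d1 d2 r by auto
    show "happy V E (glue A d1 (r \<circ> d2)) t" if "t \<in> A \<inter> B" for t
    proof -
      have "t = x \<or> t = y" using that xy by blast
      then show ?thesis
      proof
        assume "t = x"
        then show ?thesis using a0 b0 r AB glue_in[of a0 A] glue_out[of b0 A]
          by (intro happyI[of a0 V b0]) auto
      next
        assume "t = y"
        then show ?thesis using a1 b1 r AB glue_in[of a1 A] glue_out[of b1 A]
          by (intro happyI[of a1 V b1]) auto
      qed
    qed
  qed
qed

lemma separation_order_2:
  assumes sep: "separation V E A B" and card2: "card (A \<inter> B) = 2"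
  shows "card (A - B) = 1 \<or> card (B - A) = 1"
proof (rule ccontr)
  assume not1: "\<not> (card (A - B) = 1 \<or> card (B - A) = 1)"
  have sepB: "separation V E B A" using separation_sym[OF symp_E sep] .
  have AB: "A \<subseteq> V" "B \<subseteq> V" using separation_subset[OF sep] by auto
  have "finite (A - B)" "finite (B - A)" using AB finite_V by (meson Diff_subset finite_subset)+
  moreover have "A - B \<noteq> {}" "B - A \<noteq> {}" using sep by (auto simp: separation_def)
  ultimately have "card (A - B) \<noteq> 0" "card (B - A) \<noteq> 0" by simp_all
  then have cA: "card (A - B) \<ge> 2" and cB: "card (B - A) \<ge> 2" using not1 by auto
  obtain x y where xy: "A \<inter> B = {x, y}" and xny: "x \<noteq> y" using card2 by (meson card_2_iff)
  have xyB: "B \<inter> A = {x, y}" using xy by blast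
  have nxy: "\<not> E x y" using separation2_not_adjacent[OF sep xy xny] .
  obtain u where "u \<in> (A - B) \<union> (B - A)" "\<forall>z. E u z \<longleftrightarrow> z = x \<or> z = y"
    using separation2_degree2_vertex_exists[OF sep xy xny nxy] by blast
  then show False using separation2_no_degree2_vertex[OF sep xy xny cB]
      separation2_no_degree2_vertex[OF sepB xyB xny cA] by blast
qed

theorem internally_3_connected: "internally_k_connected 3 V E"
  unfolding internally_k_connected_def k_connected_def
proof (intro conjI allI impI)
  show "3 < card V" "3 - 1 < card V" using card_V_ge_5 by simp_all
  show "connected_on (V - X) E" if "X \<subseteq> V" "card X < 3 - 1" for X
  proof -
    have "card X = 0 \<or> card X = 1" using that by auto
    then show ?thesis
    proof
      assume "card X = 0"
      then have "X = {}" using that finite_subset[OF _ finite_V] by auto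
      then show ?thesis using connected_V by simp
    next
      assume "card X = 1"
      then obtain v where "X = {v}" by (rule card_1_singletonE)
      then show ?thesis using connected_Diff_vertex that by auto
    qed
  qed
  show "card (A - B) = 1 \<or> card (B - A) = 1" if "separation V E A B \<and> card (A \<inter> B) = 3 - 1" for A B
    using that separation_order_2 by simp
qed

end

theorem lemma3p2:
  fixes V :: "'a set" and E :: "'a \<Rightarrow> 'a \<Rightarrow> bool"
  assumes "simple_graph V E" and "connected_graph V E"
    and "\<not> has_K5_minor V E" and "\<not> iso_C5 V E"
    and "\<not> dynamically_4_colorable V E"
    and "\<And>(V' :: nat set) E'. simple_graph V' E' \<Longrightarrow> connected_graph V' E' \<Longrightarrow>
           \<not> has_K5_minor V' E' \<Longrightarrow> \<not> iso_C5 V' E' \<Longrightarrow>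
           num_edges V' E' < num_edges V E \<Longrightarrow> dynamically_4_colorable V' E'"
  shows "internally_k_connected 3 V E"
proof -
  interpret min_counterexample V E using assms by unfold_locales
  show ?thesis by (rule internally_3_connected)
qed

end
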